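(* Let $\xi \in \mathbb{R}\setminus\mathbb{Q}$ be badly approximable, and let $n$ be a positive integer. Then there exist positive constants $c_1, c_2, c_3, c_4$, depending only on $\xi$ and $n$, such that for each real number $X \ge 1$: (a) there is an algebraic number $\alpha$ of degree $n$ with $\max_{\bar\alpha} |\xi - \bar\alpha| \le c_1 H(\alpha)^{-2/n}$ (maximum over all conjugates $\bar\alpha$ of $\alpha$) and $c_3 X \le H(\alpha) \le c_4 X$; (b) there is an algebraic integer $\alpha$ of degree $n+1$ with $\max_{\bar\alpha\ne\alpha} |\xi - \bar\alpha| \le c_2 H(\alpha)^{-2/n}$ (maximum over all conjugates $\bar\alpha$ of $\alpha$ different from $\alpha$) and $c_3 X \le H(\alpha) \le c_4 X$.
   Context: An irrational real number $\xi$ is badly approximable if there exists a constant $c>0$ such that $|\xi - p/q| \ge c q^{-2}$ for all rational numbers $p/q$ (with $q\ge1$). The height $H(P)$ of a polynomial $P \in \mathbb{R}[T]$ is the largest absolute value of its coefficients. The height $H(\alpha)$ of an algebraic number $\alpha \in \mathbb{C}$ is the height of its irreducible (minimal) polynomial in $\mathbb{Z}[T]$. Conjugates of $\alpha$ are the roots of its minimal polynomial over $\mathbb{Q}$. *)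

theory Defs
  imports "HOL-Analysis.Analysis" "HOL-Computational_Algebra.Polynomial_Factorial"
begin

definition badly_approximable :: "real \<Rightarrow> bool" where
  "badly_approximable \<xi> \<longleftrightarrow> \<xi> \<notin> \<rat> \<and>
     (\<exists>c>0. \<forall>(p::int) (q::int). q \<ge> 1 \<longrightarrow> \<bar>\<xi> - real_of_int p / real_of_int q\<bar> \<ge> c / (real_of_int q)^2)"

definition poly_height :: "int poly \<Rightarrow> int" where
  "poly_height P = Max ((\<lambda>i. \<bar>coeff P i\<bar>) ` {..degree P})"

definition is_algebraic :: "complex \<Rightarrow> bool" where
  "is_algebraic \<alpha> \<longleftrightarrow> (\<exists>P::int poly. P \<noteq> 0 \<and> poly (map_poly of_int P) \<alpha> = 0)"

definition min_int_poly :: "complex \<Rightarrow> int poly" where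
  "min_int_poly \<alpha> = (SOME P. irreducible P \<and> lead_coeff P > 0 \<and> poly (map_poly of_int P) \<alpha> = 0)"

definition alg_degree :: "complex \<Rightarrow> nat" where
  "alg_degree \<alpha> = degree (min_int_poly \<alpha>)"

definition alg_height :: "complex \<Rightarrow> int" where
  "alg_height \<alpha> = poly_height (min_int_poly \<alpha>)"

definition conjugates :: "complex \<Rightarrow> complex set" where
  "conjugates \<alpha> = {\<beta>. poly (map_poly of_int (min_int_poly \<alpha>)) \<beta> = 0}"

definition algebraic_integer :: "complex \<Rightarrow> bool" where
  "algebraic_integer \<alpha> \<longleftrightarrow> (\<exists>P::int poly. lead_coeff P = 1 \<and> poly (map_poly of_int P) \<alpha> = 0)"

end

(*
  Since xi is badly approximable, at every scale Q there are integer vectors (q, p), (q', p') of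
  determinant 1 with |q|, |q'| << Q and |q xi - p|, |q' xi - p'| << 1/Q.  The two linear forms
  q x - p and q' x - p' span the real linear polynomials, so every real polynomial of degree <= n is
  a real combination of the products (q' x - p')^i (q x - p)^(n - i).  Rounding the coefficients of
  this combination (into a fixed residue class modulo 4) yields an integer polynomial that is
  Eisenstein at 2, with error << Q^n |x - xi|^n outside the disc |x - xi| < Q^-2.

  For (a) this is applied to A (x - xi)^n with A ~ Q^n: all roots of the result lie in the disc, and
  the height is ~ Q^n, from above by the l1 norm and from below because b^n P(a/b) is a nonzero (odd)
  integer for a good approximation a/b of xi.  For (b) the monic polynomial (x - xi)^n (x - xi + A)
  is approximated instead; comparing |P| at xi + 1 and at xi + 2 Q^-2 shows that at most one root
  leaves the disc.  Choosing Q ~ X^(1/n) turns Q^-2 into H^(-2/n).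
*)

theory Submission
  imports Defs "HOL-Computational_Algebra.Fundamental_Theorem_Algebra" "HOL-Analysis.Kronecker_Approximation_Theorem"
begin

lemma map_poly_of_int_add:
  "map_poly (of_int :: int \<Rightarrow> 'a::comm_ring_1) (A + B) = map_poly of_int A + map_poly of_int B"
  by (rule poly_eqI) (simp add: coeff_map_poly)

lemma map_poly_of_int_diff:
  "map_poly (of_int :: int \<Rightarrow> 'a::comm_ring_1) (A - B) = map_poly of_int A - map_poly of_int B"
  by (rule poly_eqI) (simp add: coeff_map_poly)

lemma map_poly_of_int_mult:
  "map_poly (of_int :: int \<Rightarrow> 'a::comm_ring_1) (A * B) = map_poly of_int A * map_poly of_int B"
  by (rule poly_eqI) (simp add: coeff_map_poly coeff_mult)

lemma map_poly_of_int_smult: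
  "map_poly (of_int :: int \<Rightarrow> 'a::comm_ring_1) (smult c A) = smult (of_int c) (map_poly of_int A)"
  by (rule map_poly_smult) auto

lemma map_poly_of_int_pCons:
  "map_poly (of_int :: int \<Rightarrow> 'a::comm_ring_1) (pCons a A) = pCons (of_int a) (map_poly of_int A)"
  by (rule map_poly_pCons) simp

lemma map_poly_of_int_power:
  "map_poly (of_int :: int \<Rightarrow> 'a::comm_ring_1) (A ^ k) = map_poly of_int A ^ k"
  by (induction k) (simp_all add: map_poly_of_int_mult)

lemma map_poly_of_int_sum:
  "map_poly (of_int :: int \<Rightarrow> 'a::comm_ring_1) (\<Sum>i\<in>I. f i) = (\<Sum>i\<in>I. map_poly of_int (f i))"
  by (induction I rule: infinite_finite_induct) (simp_all add: map_poly_of_int_add)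

lemma degree_map_poly_of_int [simp]:
  "degree (map_poly (of_int :: int \<Rightarrow> 'a::{comm_ring_1,ring_char_0}) A) = degree A"
  by (rule degree_map_poly) auto

lemma coeff_map_poly_of_int [simp]:
  "coeff (map_poly (of_int :: int \<Rightarrow> 'a::comm_ring_1) A) k = of_int (coeff A k)"
  by (simp add: coeff_map_poly)

lemma degree_pos_if_root:
  fixes P :: "int poly" and \<alpha> :: complex
  assumes "P \<noteq> 0" and "poly (map_poly of_int P) \<alpha> = 0"
  shows "degree P > 0"
proof (rule ccontr)
  assume "\<not> degree P > 0"
  then obtain a where "P = [:a:]" by (metis degree_eq_zeroE gr0I)
  then show False using assms by (simp add: map_poly_of_int_pCons)
qed

section \<open>Minimal polynomials\<close>

lemma pseudo_divmod_common_root: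
  fixes P M :: "int poly" and \<alpha> :: complex
  assumes "M \<noteq> 0" and "poly (map_poly of_int P) \<alpha> = 0" and "poly (map_poly of_int M) \<alpha> = 0"
  obtains c s t where "c \<noteq> 0" and "smult c P = M * s + t" and "t = 0 \<or> degree t < degree M"
    and "poly (map_poly of_int t) \<alpha> = 0"
proof -
  obtain s t where st: "pseudo_divmod P M = (s, t)" by (metis surj_pair)
  define c where "c = coeff M (degree M) ^ (Suc (degree P) - degree M)"
  have eq: "smult c P = M * s + t" and "t = 0 \<or> degree t < degree M"
    using pseudo_divmod[OF assms(1) st] unfolding c_def by auto
  moreover have "c \<noteq> 0" unfolding c_def using assms(1) by simp
  moreover have "poly (map_poly of_int (smult c P)) \<alpha> = poly (map_poly of_int (M * s + t)) \<alpha>"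
    using eq by simp
  then have "poly (map_poly of_int t) \<alpha> = 0"
    using assms(2,3) by (simp add: map_poly_of_int_smult map_poly_of_int_add map_poly_of_int_mult)
  ultimately show ?thesis using that by blast
qed

lemma irreducible_root_degree_le:
  fixes P R :: "int poly" and \<alpha> :: complex
  assumes irr: "irreducible P" and rP: "poly (map_poly of_int P) \<alpha> = 0"
    and R0: "R \<noteq> 0" and rR: "poly (map_poly of_int R) \<alpha> = 0"
  shows "degree P \<le> degree R"
proof -
  define vanishes_with_degree where
    "vanishes_with_degree = (\<lambda>d. \<exists>M::int poly. M \<noteq> 0 \<and> poly (map_poly of_int M) \<alpha> = 0 \<and> degree M = d)"
  define d where "d = (LEAST d. vanishes_with_degree d)"
  have "vanishes_with_degree d"
    unfolding d_def by (rule LeastI[of _ "degree R"]) (use R0 rR vanishes_with_degree_def in blast)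
  then obtain M where M: "M \<noteq> 0" "poly (map_poly of_int M) \<alpha> = 0" and dM: "degree M = d"
    unfolding vanishes_with_degree_def by blast
  have minimal: "degree M \<le> degree T" if "T \<noteq> 0" "poly (map_poly of_int T) \<alpha> = 0" for T :: "int poly"
    unfolding dM d_def by (rule Least_le) (use that vanishes_with_degree_def in blast)
  obtain c s t where c: "c \<noteq> 0" and eq: "smult c P = M * s + t"
    and "t = 0 \<or> degree t < degree M" and "poly (map_poly of_int t) \<alpha> = 0"
    using pseudo_divmod_common_root[OF M(1) rP M(2)] .
  then have "t = 0" using minimal by fastforce
  moreover have "P dvd smult c P" by (simp add: dvd_smult)
  ultimately have "P dvd M * s" using eq by simp
  then have "P dvd M \<or> P dvd s"
    using irreducible_imp_prime_poly[OF irr] prime_elem_dvd_mult_iff by blast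
  then show ?thesis
  proof
    assume "P dvd M"
    then have "degree P \<le> degree M" using M(1) by (rule dvd_imp_degree_le)
    also have "degree M \<le> degree R" using minimal R0 rR .
    finally show ?thesis .
  next
    assume "P dvd s"
    then obtain w where w: "s = P * w" by (rule dvdE)
    have "[:c:] * P = (M * w) * P" using eq \<open>t = 0\<close> w by (simp add: mult_ac)
    moreover have "P \<noteq> 0" using irr by auto
    ultimately have cMw: "[:c:] = M * w" using mult_cancel_right by blast
    then have "w \<noteq> 0" using c by auto
    then have "degree M + degree w = 0" using cMw M(1) by (metis degree_mult_eq degree_pCons_0)
    then have "degree M = 0" by simp
    then show ?thesis using degree_pos_if_root[OF M] by simp
  qed
qed

lemma irreducible_root_dvd:
  fixes P R :: "int poly" and \<alpha> :: complex
  assumes irr: "irreducible P" and rP: "poly (map_poly of_int P) \<alpha> = 0"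
    and rR: "poly (map_poly of_int R) \<alpha> = 0"
  shows "P dvd R"
proof -
  have P0: "P \<noteq> 0" using irr by auto
  obtain c s t where c: "c \<noteq> 0" and eq: "smult c R = P * s + t"
    and "t = 0 \<or> degree t < degree P" and "poly (map_poly of_int t) \<alpha> = 0"
    using pseudo_divmod_common_root[OF P0 rR rP] .
  then have "t = 0" using irreducible_root_degree_le[OF irr rP] by fastforce
  then have "P dvd [:c:] * R" using eq by simp
  moreover have "\<not> P dvd [:c:]"
  proof
    assume "P dvd [:c:]"
    then have "degree P \<le> degree [:c:]" using c by (intro dvd_imp_degree_le) auto
    then show False using degree_pos_if_root[OF P0 rP] by simp
  qed
  ultimately show ?thesis
    using irreducible_imp_prime_poly[OF irr] prime_elem_dvd_mult_iff by blast
qed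

lemma min_int_poly_unique:
  fixes P :: "int poly" and \<alpha> :: complex
  assumes irr: "irreducible P" and lc: "lead_coeff P > 0" and rP: "poly (map_poly of_int P) \<alpha> = 0"
  shows "min_int_poly \<alpha> = P"
proof -
  have "\<exists>P. irreducible P \<and> lead_coeff P > 0 \<and> poly (map_poly of_int P) \<alpha> = 0"
    using assms by blast
  then have Q: "irreducible (min_int_poly \<alpha>)" "lead_coeff (min_int_poly \<alpha>) > 0"
    "poly (map_poly of_int (min_int_poly \<alpha>)) \<alpha> = 0"
    unfolding min_int_poly_def by (metis (mono_tags, lifting) someI_ex)+
  have normalized: "normalize Q = Q" if "lead_coeff Q > 0" for Q :: "int poly"
    using that by (simp add: normalize_poly_eq_map_poly)
  show ?thesis
    by (rule associated_eqI) (use irreducible_root_dvd Q irr rP normalized lc in blast)+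
qed

lemma algebraic_number_of_irreducible:
  fixes P :: "int poly" and \<alpha> :: complex
  assumes "irreducible P" and "lead_coeff P > 0" and "poly (map_poly of_int P) \<alpha> = 0"
  shows "is_algebraic \<alpha>" and "alg_degree \<alpha> = degree P" and "alg_height \<alpha> = poly_height P"
    and "conjugates \<alpha> = {z. poly (map_poly of_int P) z = 0}"
proof -
  have mip: "min_int_poly \<alpha> = P" using min_int_poly_unique assms .
  have "P \<noteq> 0" using assms(1) by auto
  then show "is_algebraic \<alpha>" unfolding is_algebraic_def using assms(3) by blast
  show "alg_degree \<alpha> = degree P" "alg_height \<alpha> = poly_height P"
    "conjugates \<alpha> = {z. poly (map_poly of_int P) z = 0}"
    unfolding alg_degree_def alg_height_def conjugates_def mip by simp_all
qed

section \<open>Eisenstein's criterion\<close>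

lemma eisenstein_no_split:
  fixes A B :: "int poly" and p :: int
  assumes "prime p" and PAB: "P = A * B"
    and A0: "p dvd coeff A 0" and B0: "\<not> p dvd coeff B 0" and lcA: "\<not> p dvd lead_coeff A"
    and dA: "degree A \<ge> 1" and dB: "degree B \<ge> 1"
    and lower: "\<forall>k<degree P. p dvd coeff P k"
  shows False
proof -
  define i where "i = (LEAST i. \<not> p dvd coeff A i)"
  have Ai: "\<not> p dvd coeff A i" unfolding i_def by (rule LeastI) (use lcA in blast)
  have i_le: "i \<le> degree A" unfolding i_def by (rule Least_le) (use lcA in blast)
  have below: "p dvd coeff A j" if "j < i" for j using not_less_Least that unfolding i_def by blast
  have "i \<noteq> 0"
  proof
    assume "i = 0"
    then show False using Ai A0 by simp
  qed
  have "degree P = degree A + degree B" using PAB dA dB by (auto intro: degree_mult_eq)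
  then have "p dvd coeff P i" using lower i_le dB by simp
  moreover have "coeff P i = (\<Sum>j<i. coeff A j * coeff B (i - j)) + coeff A i * coeff B 0"
    using PAB by (simp add: coeff_mult lessThan_Suc_atMost[symmetric])
  moreover have "p dvd (\<Sum>j<i. coeff A j * coeff B (i - j))"
    by (rule dvd_sum) (use below in auto)
  moreover have "\<not> p dvd coeff A i * coeff B 0" using Ai B0 \<open>prime p\<close> by (simp add: prime_dvd_mult_iff)
  ultimately show False by (simp add: dvd_add_right_iff)
qed

lemma eisenstein_irreducible:
  fixes P :: "int poly" and p :: int
  assumes "prime p" and content: "content P = 1" and "degree P \<ge> 1"
    and lc: "\<not> p dvd lead_coeff P" and lower: "\<forall>k<degree P. p dvd coeff P k"
    and const: "\<not> p ^ 2 dvd coeff P 0"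
  shows "irreducible P"
proof (rule irreducibleI)
  show "P \<noteq> 0" "\<not> P dvd 1" using \<open>degree P \<ge> 1\<close> by (auto simp: is_unit_poly_iff)
  fix A B assume PAB: "P = A * B"
  have "degree A = 0 \<or> degree B = 0"
  proof (rule ccontr)
    assume "\<not> (degree A = 0 \<or> degree B = 0)"
    then have dA: "degree A \<ge> 1" and dB: "degree B \<ge> 1" by auto
    have "lead_coeff P = lead_coeff A * lead_coeff B" using PAB by (simp add: lead_coeff_mult)
    then have lcA: "\<not> p dvd lead_coeff A" and lcB: "\<not> p dvd lead_coeff B" using lc by auto
    have c0: "coeff P 0 = coeff A 0 * coeff B 0" using PAB by (simp add: coeff_mult)
    moreover have "p dvd coeff P 0" using lower \<open>degree P \<ge> 1\<close> by simp
    ultimately have "p dvd coeff A 0 \<or> p dvd coeff B 0"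
      using \<open>prime p\<close> by (simp add: prime_dvd_mult_iff)
    moreover have "\<not> (p dvd coeff A 0 \<and> p dvd coeff B 0)"
      using const c0 by (auto simp: power2_eq_square mult_dvd_mono)
    ultimately show False
      using eisenstein_no_split[OF \<open>prime p\<close> PAB _ _ lcA dA dB lower]
        eisenstein_no_split[OF \<open>prime p\<close> PAB[unfolded mult.commute[of A]] _ _ lcB dB dA lower]
      by blast
  qed
  have unit_if_const: "[:a:] dvd 1" if "P = smult a Q" for a and Q :: "int poly"
  proof -
    have "\<bar>a\<bar> * content Q = 1" using content that by simp
    then have "a dvd 1" by (metis dvd_triv_left abs_dvd_iff)
    then show ?thesis by (simp add: is_unit_const_poly_iff)
  qed
  from \<open>degree A = 0 \<or> degree B = 0\<close> show "A dvd 1 \<or> B dvd 1"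
  proof
    assume "degree A = 0"
    then obtain a where "A = [:a:]" by (rule degree_eq_zeroE)
    then show ?thesis using unit_if_const[of a B] PAB by simp
  next
    assume "degree B = 0"
    then obtain b where "B = [:b:]" by (rule degree_eq_zeroE)
    then show ?thesis using unit_if_const[of b A] PAB by (simp add: mult.commute)
  qed
qed

definition eisenstein_at_2 :: "int poly \<Rightarrow> bool" where
  "eisenstein_at_2 P \<longleftrightarrow> odd (lead_coeff P) \<and> (\<forall>k<degree P. even (coeff P k)) \<and> coeff P 0 mod 4 = 2"

lemma eisenstein_at_2_degree_pos: "eisenstein_at_2 P \<Longrightarrow> degree P > 0"
proof (rule ccontr)
  assume "eisenstein_at_2 P" and "\<not> degree P > 0"
  then have "odd (coeff P 0)" and "coeff P 0 mod 4 = 2" unfolding eisenstein_at_2_def by auto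
  then show False by presburger
qed

lemma eisenstein_at_2_irreducible:
  assumes "content P = 1" and "eisenstein_at_2 P"
  shows "irreducible P"
proof (rule eisenstein_irreducible[of 2])
  show "degree P \<ge> 1" using eisenstein_at_2_degree_pos[OF assms(2)] by simp
  have "coeff P 0 mod 4 = 2" using assms(2) unfolding eisenstein_at_2_def by blast
  then show "\<not> 2 ^ 2 dvd coeff P 0" by (simp add: dvd_eq_mod_eq_0)
qed (use assms in \<open>auto simp: eisenstein_at_2_def\<close>)

lemma eisenstein_at_2_smultD:
  assumes "eisenstein_at_2 (smult d P)"
  shows "eisenstein_at_2 P"
proof -
  have d: "odd d" and lc: "odd (lead_coeff P)"
    using assms unfolding eisenstein_at_2_def by (auto simp: degree_smult_eq split: if_splits)
  then have dP: "degree (smult d P) = degree P" by auto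
  have "even (coeff P k)" if "k < degree P" for k
    using assms that d dP unfolding eisenstein_at_2_def by auto
  moreover have "coeff P 0 mod 4 = 2"
  proof -
    have mod4_even: "even w" and mod4_odd: "odd (w div 2)" if "w mod 4 = 2" for w :: int
      using that by presburger+
    have mod4_intro: "(2 * w) mod 4 = 2" if "odd w" for w :: int
      using that by presburger
    have dc: "(d * coeff P 0) mod 4 = 2" using assms unfolding eisenstein_at_2_def by simp
    then obtain y where y: "coeff P 0 = 2 * y" using d mod4_even by (metis even_mult_iff evenE)
    then have "odd (d * y)" using mod4_odd[OF dc] by (simp add: mult.left_commute)
    then show ?thesis using y mod4_intro by simp
  qed
  ultimately show ?thesis using lc unfolding eisenstein_at_2_def by blast
qed

lemma eisenstein_at_2_normalize:
  assumes "eisenstein_at_2 P"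
  obtains d Pm where "P = smult d Pm" and "d \<noteq> 0" and "eisenstein_at_2 Pm" and "irreducible Pm"
    and "lead_coeff Pm > 0"
proof -
  have P0: "P \<noteq> 0" using assms unfolding eisenstein_at_2_def by auto
  define s :: int where "s = sgn (lead_coeff (primitive_part P))"
  define Pm where "Pm = smult s (primitive_part P)"
  have lc: "lead_coeff (primitive_part P) \<noteq> 0"
    using P0 by (metis leading_coeff_0_iff primitive_part_eq_0_iff)
  then have s: "s * s = 1" "s \<noteq> 0" unfolding s_def by (auto simp: sgn_if)
  have P: "P = smult (content P * s) Pm"
    unfolding Pm_def using s by (simp add: smult_smult mult.assoc)
  have "eisenstein_at_2 Pm" using assms P eisenstein_at_2_smultD by metis
  moreover have "content Pm = 1" using P0 lc unfolding Pm_def s_def by (auto simp: content_smult sgn_if)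
  moreover have "lead_coeff Pm > 0" using lc unfolding Pm_def s_def by (auto simp: sgn_if)
  ultimately show ?thesis using that P P0 s eisenstein_at_2_irreducible by fastforce
qed

lemma odd_homogenization:
  assumes "eisenstein_at_2 P" and "odd a"
  shows "odd (\<Sum>k\<le>degree P. coeff P k * a ^ k * b ^ (degree P - k))"
proof -
  have "(\<Sum>k\<le>degree P. coeff P k * a ^ k * b ^ (degree P - k))
      = (\<Sum>k<degree P. coeff P k * a ^ k * b ^ (degree P - k)) + lead_coeff P * a ^ degree P"
    by (simp add: lessThan_Suc_atMost[symmetric])
  moreover have "even (\<Sum>k<degree P. coeff P k * a ^ k * b ^ (degree P - k))"
    using assms(1) unfolding eisenstein_at_2_def by (intro dvd_sum) auto
  moreover have "odd (lead_coeff P * a ^ degree P)"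
    using assms unfolding eisenstein_at_2_def by simp
  ultimately show ?thesis by simp
qed

section \<open>The l1 norm of a polynomial\<close>

definition poly_l1 :: "'a::real_normed_field poly \<Rightarrow> real" where
  "poly_l1 R = (\<Sum>k\<le>degree R. norm (coeff R k))"

lemma poly_l1_eq_sum: "degree R \<le> N \<Longrightarrow> poly_l1 R = (\<Sum>k\<le>N. norm (coeff R k))"
  unfolding poly_l1_def
  by (rule sum.mono_neutral_left) (auto simp: coeff_eq_0)

lemma poly_l1_nonneg: "poly_l1 R \<ge> 0"
  unfolding poly_l1_def by (simp add: sum_nonneg)

lemma norm_coeff_le_poly_l1: "norm (coeff R k) \<le> poly_l1 R"
proof (cases "k \<le> degree R")
  case True
  then show ?thesis unfolding poly_l1_def
    by (intro member_le_sum) auto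
next
  case False
  then show ?thesis using poly_l1_nonneg by (simp add: coeff_eq_0)
qed

lemma poly_l1_0 [simp]: "poly_l1 0 = 0" by (simp add: poly_l1_def)

lemma poly_l1_1 [simp]: "poly_l1 1 = 1" by (simp add: poly_l1_def)

lemma poly_l1_add_le: "poly_l1 (A + B) \<le> poly_l1 A + poly_l1 B"
proof -
  define N where "N = max (degree A) (degree B)"
  have "poly_l1 (A + B) = (\<Sum>k\<le>N. norm (coeff (A + B) k))"
    by (rule poly_l1_eq_sum) (simp add: N_def degree_add_le)
  also have "\<dots> \<le> (\<Sum>k\<le>N. norm (coeff A k) + norm (coeff B k))"
    by (rule sum_mono) (simp add: norm_triangle_ineq)
  also have "\<dots> = poly_l1 A + poly_l1 B"
  proof -
    have "poly_l1 A = (\<Sum>k\<le>N. norm (coeff A k))" by (rule poly_l1_eq_sum) (simp add: N_def)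
    moreover have "poly_l1 B = (\<Sum>k\<le>N. norm (coeff B k))" by (rule poly_l1_eq_sum) (simp add: N_def)
    ultimately show ?thesis by (simp add: sum.distrib)
  qed
  finally show ?thesis .
qed

lemma poly_l1_smult: "poly_l1 (smult c A) = norm c * poly_l1 A"
proof -
  have "poly_l1 (smult c A) = (\<Sum>k\<le>degree A. norm (coeff (smult c A) k))"
    by (rule poly_l1_eq_sum) (simp add: degree_smult_le)
  also have "\<dots> = norm c * poly_l1 A" by (simp add: poly_l1_def sum_distrib_left norm_mult)
  finally show ?thesis .
qed

lemma poly_l1_uminus: "poly_l1 (- A) = poly_l1 A"
  using poly_l1_smult[of "-1" A] by simp

lemma poly_l1_diff_le: "poly_l1 (A - B) \<le> poly_l1 A + poly_l1 B"
  using poly_l1_add_le[of A "-B"] by (simp add: poly_l1_uminus)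

lemma poly_l1_pCons: "poly_l1 (pCons a A) = norm a + poly_l1 A"
proof -
  have "poly_l1 (pCons a A) = (\<Sum>k\<le>Suc (degree A). norm (coeff (pCons a A) k))"
    by (rule poly_l1_eq_sum) (simp add: degree_pCons_le)
  also have "\<dots> = norm a + (\<Sum>k\<le>degree A. norm (coeff A k))"
    by (subst sum.atMost_Suc_shift) simp
  finally show ?thesis by (simp add: poly_l1_def)
qed

lemma poly_l1_mult_le: "poly_l1 (A * B) \<le> poly_l1 A * poly_l1 B"
proof (induction A rule: pCons_induct)
  case 0
  then show ?case by simp
next
  case (pCons a A)
  have "poly_l1 (pCons a A * B) = poly_l1 (smult a B + pCons 0 (A * B))" by simp
  also have "\<dots> \<le> poly_l1 (smult a B) + poly_l1 (pCons 0 (A * B))" by (rule poly_l1_add_le)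
  also have "\<dots> = norm a * poly_l1 B + poly_l1 (A * B)" by (simp add: poly_l1_smult poly_l1_pCons)
  also have "\<dots> \<le> norm a * poly_l1 B + poly_l1 A * poly_l1 B" using pCons.IH by simp
  also have "\<dots> = poly_l1 (pCons a A) * poly_l1 B" by (simp add: poly_l1_pCons algebra_simps)
  finally show ?case .
qed

lemma poly_l1_power_le: "poly_l1 (A ^ k) \<le> poly_l1 A ^ k"
proof (induction k)
  case 0
  then show ?case by simp
next
  case (Suc k)
  have "poly_l1 (A ^ Suc k) \<le> poly_l1 A * poly_l1 (A ^ k)" by (simp add: poly_l1_mult_le)
  also have "\<dots> \<le> poly_l1 A * poly_l1 A ^ k" by (rule mult_left_mono[OF Suc.IH poly_l1_nonneg])
  finally show ?case by simp
qed

lemma poly_l1_sum_le: "poly_l1 (\<Sum>i\<in>I. f i) \<le> (\<Sum>i\<in>I. poly_l1 (f i))"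
proof (induction I rule: infinite_finite_induct)
  case (insert x F)
  then show ?case using poly_l1_add_le[of "f x" "sum f F"] by simp
qed simp_all

lemma poly_l1_linear: "poly_l1 [:a, b:] = norm a + norm b"
  by (simp add: poly_l1_pCons)

lemma norm_poly_le_poly_l1: "norm (poly R z) \<le> poly_l1 R * max 1 (norm z) ^ degree R"
proof -
  have "norm (poly R z) = norm (\<Sum>k\<le>degree R. coeff R k * z ^ k)" by (simp add: poly_altdef)
  also have "\<dots> \<le> (\<Sum>k\<le>degree R. norm (coeff R k) * norm z ^ k)"
    by (rule order.trans[OF norm_sum]) (simp add: norm_mult norm_power mult.assoc)
  also have "\<dots> \<le> (\<Sum>k\<le>degree R. norm (coeff R k) * max 1 (norm z) ^ degree R)"
  proof (rule sum_mono)
    fix k assume "k \<in> {..degree R}"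
    then have "norm z ^ k \<le> max 1 (norm z) ^ degree R"
      by (intro order.trans[OF power_mono[of "norm z" "max 1 (norm z)"] power_increasing]) auto
    then show "norm (coeff R k) * norm z ^ k \<le> norm (coeff R k) * max 1 (norm z) ^ degree R"
      by (simp add: mult_left_mono)
  qed
  also have "\<dots> = poly_l1 R * max 1 (norm z) ^ degree R" by (simp add: poly_l1_def sum_distrib_right)
  finally show ?thesis .
qed

lemma abs_coeff_le_poly_height: "\<bar>coeff P k\<bar> \<le> poly_height P"
proof (cases "k \<le> degree P")
  case True
  then show ?thesis unfolding poly_height_def by (intro Max_ge) auto
next
  case False
  have "\<bar>coeff P 0\<bar> \<le> poly_height P" unfolding poly_height_def by (intro Max_ge) auto
  then show ?thesis using False by (simp add: coeff_eq_0)
qed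

lemma poly_height_le: "(\<And>k. \<bar>coeff P k\<bar> \<le> B) \<Longrightarrow> poly_height P \<le> B"
  unfolding poly_height_def by (subst Max_le_iff) auto

lemma poly_height_le_poly_l1:
  "real_of_int (poly_height P) \<le> poly_l1 (map_poly of_int P :: 'a::real_normed_field poly)"
proof -
  have "real_of_int \<bar>coeff P k\<bar> \<le> poly_l1 (map_poly of_int P :: 'a poly)" for k
    using norm_coeff_le_poly_l1[of "map_poly of_int P :: 'a poly" k] by (simp only: coeff_map_poly_of_int norm_of_int)
  then have "poly_height P \<le> \<lfloor>poly_l1 (map_poly of_int P :: 'a poly)\<rfloor>"
    by (intro poly_height_le) (simp add: le_floor_iff)
  then show ?thesis by linarith
qed

lemma poly_l1_le_poly_height:
  "poly_l1 (map_poly of_int P :: 'a::real_normed_field poly) \<le> (real (degree P) + 1) * real_of_int (poly_height P)"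
proof -
  have "poly_l1 (map_poly of_int P :: 'a poly) = (\<Sum>k\<le>degree P. real_of_int \<bar>coeff P k\<bar>)"
    unfolding poly_l1_def by (simp only: degree_map_poly_of_int coeff_map_poly_of_int norm_of_int of_int_abs)
  also have "\<dots> \<le> (\<Sum>k\<le>degree P. real_of_int (poly_height P))"
    by (intro sum_mono) (simp only: of_int_le_iff abs_coeff_le_poly_height)
  finally show ?thesis by (simp add: add.commute)
qed

lemma poly_height_le_smult:
  assumes "d \<noteq> 0"
  shows "poly_height P \<le> poly_height (smult d P)"
proof (rule poly_height_le)
  fix k
  have "1 \<le> \<bar>d\<bar>" using assms by linarith
  then have "\<bar>coeff P k\<bar> \<le> \<bar>d\<bar> * \<bar>coeff P k\<bar>" by (simp add: mult_le_cancel_right1)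
  also have "\<dots> \<le> poly_height (smult d P)"
    using abs_coeff_le_poly_height[of "smult d P" k] by (simp add: abs_mult)
  finally show "\<bar>coeff P k\<bar> \<le> poly_height (smult d P)" .
qed

lemma norm_poly_le_poly_height:
  fixes z :: "'a::real_normed_field"
  shows "norm (poly (map_poly of_int P) z)
    \<le> (real (degree P) + 1) * real_of_int (poly_height P) * max 1 (norm z) ^ degree P"
  using norm_poly_le_poly_l1[of "map_poly of_int P" z] poly_l1_le_poly_height[of P, where 'a='a]
  by (simp add: order.trans mult_right_mono)

section \<open>A Liouville-type lower bound for the leading coefficient\<close>

lemma int_poly_has_root:
  fixes P :: "int poly"
  assumes "degree P > 0"
  obtains z :: complex where "poly (map_poly of_int P) z = 0"
  using fundamental_theorem_of_algebra[of "map_poly of_int P :: complex poly"] assms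
  by (auto simp: constant_degree)

lemma complex_roots_of_int_poly:
  fixes P :: "int poly"
  obtains root :: "nat \<Rightarrow> complex"
  where "\<And>z. poly (map_poly of_int P) z = of_int (lead_coeff P) * (\<Prod>i<degree P. z - root i)"
proof -
  define Pc :: "complex poly" where "Pc = map_poly of_int P"
  obtain root where "smult (lead_coeff Pc) (\<Prod>i<degree Pc. [:-root i, 1:]) = Pc"
    by (rule complex_poly_decompose')
  then have fac: "smult (of_int (lead_coeff P)) (\<Prod>i<degree P. [:-root i, 1:]) = Pc"
    by (simp add: Pc_def)
  have "poly Pc z = of_int (lead_coeff P) * (\<Prod>i<degree P. z - root i)" for z
    by (subst fac[symmetric]) (simp add: poly_prod)
  then show ?thesis using that unfolding Pc_def by blast
qed

lemma homogenization_eq_prod: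
  fixes P :: "int poly" and a b :: int and root :: "nat \<Rightarrow> complex"
  assumes "b \<noteq> 0"
    and P: "\<And>z. poly (map_poly of_int P) z = of_int (lead_coeff P) * (\<Prod>i<degree P. z - root i)"
  shows "of_int (\<Sum>k\<le>degree P. coeff P k * a ^ k * b ^ (degree P - k))
    = of_int (lead_coeff P) * (\<Prod>i<degree P. of_int a - of_int b * root i)"
proof -
  define n where "n = degree P"
  define z :: complex where "z = of_int a / of_int b"
  have bc: "(of_int b :: complex) \<noteq> 0" using assms(1) by simp
  have "(of_int (\<Sum>k\<le>n. coeff P k * a ^ k * b ^ (n - k)) :: complex)
      = (\<Sum>k\<le>n. of_int (coeff P k) * (of_int b ^ n * z ^ k))"
  proof (simp, intro sum.cong refl)
    fix k assume "k \<in> {..n}"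
    then have "of_int b ^ n = (of_int b :: complex) ^ k * of_int b ^ (n - k)"
      by (simp add: power_add[symmetric])
    then show "of_int (coeff P k) * of_int a ^ k * of_int b ^ (n - k) = of_int (coeff P k) * (of_int b ^ n * z ^ k)"
      unfolding z_def using bc by (simp add: power_divide field_simps)
  qed
  also have "\<dots> = of_int b ^ n * poly (map_poly of_int P) z"
    by (simp add: poly_altdef n_def sum_distrib_left mult_ac)
  also have "\<dots> = of_int (lead_coeff P) * (\<Prod>i<n. of_int b * (z - root i))"
    unfolding P by (simp add: n_def prod.distrib mult_ac)
  also have "(\<Prod>i<n. of_int b * (z - root i)) = (\<Prod>i<n. of_int a - of_int b * root i)"
    unfolding z_def using bc by (intro prod.cong refl) (simp add: field_simps)
  finally show ?thesis unfolding n_def .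
qed

text \<open>The nonzero integer \<open>b\<^sup>n P(a/b)\<close> is at least 1 in absolute value, while each of its
  factors \<open>a - b z\<^sub>i\<close> is at most \<open>\<delta>\<close>.\<close>

lemma liouville_lower_bound:
  fixes P :: "int poly" and a b :: int and \<delta> :: real
  assumes "b \<noteq> 0" and N: "(\<Sum>k\<le>degree P. coeff P k * a ^ k * b ^ (degree P - k)) \<noteq> 0"
    and close: "\<And>z::complex. poly (map_poly of_int P) z = 0 \<Longrightarrow> norm (of_int a - of_int b * z) \<le> \<delta>"
  shows "1 \<le> \<bar>real_of_int (lead_coeff P)\<bar> * \<delta> ^ degree P"
proof -
  define n where "n = degree P"
  obtain root :: "nat \<Rightarrow> complex"
    where P: "\<And>z. poly (map_poly of_int P) z = of_int (lead_coeff P) * (\<Prod>i<n. z - root i)"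
    using complex_roots_of_int_poly[of P] unfolding n_def by blast
  have root: "poly (map_poly of_int P) (root i) = 0" if "i < n" for i
    unfolding P using that by (auto simp: prod_zero_iff)
  have "norm (of_int (\<Sum>k\<le>n. coeff P k * a ^ k * b ^ (n - k)) :: complex)
      = norm (of_int (lead_coeff P) :: complex) * norm (\<Prod>i<n. of_int a - of_int b * root i)"
    using homogenization_eq_prod[OF assms(1) P[unfolded n_def], of a] unfolding n_def
    by (simp only: norm_mult)
  then have "\<bar>real_of_int (\<Sum>k\<le>n. coeff P k * a ^ k * b ^ (n - k))\<bar>
      = \<bar>real_of_int (lead_coeff P)\<bar> * (\<Prod>i<n. norm (of_int a - of_int b * root i))"
    by (simp only: norm_of_int prod_norm)
  also have "\<dots> \<le> \<bar>real_of_int (lead_coeff P)\<bar> * (\<Prod>i<n. \<delta>)"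
    using close root by (intro mult_left_mono prod_mono) auto
  also have "\<dots> = \<bar>real_of_int (lead_coeff P)\<bar> * \<delta> ^ n" by simp
  finally have "\<bar>real_of_int (\<Sum>k\<le>n. coeff P k * a ^ k * b ^ (n - k))\<bar> \<le> \<bar>real_of_int (lead_coeff P)\<bar> * \<delta> ^ n" .
  moreover have "(1::int) \<le> \<bar>\<Sum>k\<le>n. coeff P k * a ^ k * b ^ (n - k)\<bar>" using N unfolding n_def by linarith
  ultimately show ?thesis unfolding n_def by (metis of_int_1_le_iff of_int_abs order.trans)
qed

section \<open>Real polynomials in the basis of products of two linear forms\<close>

definition real_poly :: "'a::real_normed_field poly \<Rightarrow> bool" where
  "real_poly R \<longleftrightarrow> (\<forall>k. coeff R k \<in> \<real>)"

lemma real_poly_diff: "real_poly A \<Longrightarrow> real_poly B \<Longrightarrow> real_poly (A - B)"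
  by (simp add: real_poly_def)

lemma real_poly_smult: "real_poly A \<Longrightarrow> real_poly (smult (of_real a) A)"
  by (simp add: real_poly_def)

lemma real_poly_mult: "real_poly A \<Longrightarrow> real_poly B \<Longrightarrow> real_poly (A * B)"
  unfolding real_poly_def coeff_mult by (auto intro!: sum_in_Reals Reals_mult)

lemma real_poly_power: "real_poly A \<Longrightarrow> real_poly (A ^ k)"
  by (induction k) (auto simp: real_poly_mult, simp add: real_poly_def coeff_1)

lemma real_poly_linear: "real_poly [:of_real a, of_real b:]"
  by (simp add: real_poly_def coeff_pCons split: nat.split)

lemma real_poly_monom: "real_poly (monom 1 k)"
  by (simp add: real_poly_def coeff_monom)

lemma real_poly_of_int: "real_poly (map_poly of_int P)"
  by (simp add: real_poly_def)

definition binary_comb :: "nat \<Rightarrow> (nat \<Rightarrow> real) \<Rightarrow> 'a::real_normed_field poly \<Rightarrow> 'a poly \<Rightarrow> 'a poly" where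
  "binary_comb n \<mu> X Y = (\<Sum>i\<le>n. smult (of_real (\<mu> i)) (X ^ i * Y ^ (n - i)))"

lemma binary_comb_add:
  "binary_comb n \<mu> X Y + binary_comb n \<nu> X Y = binary_comb n (\<lambda>i. \<mu> i + \<nu> i) X Y"
  by (simp add: binary_comb_def sum.distrib smult_add_left)

lemma smult_binary_comb:
  "smult (of_real a) (binary_comb n \<mu> X Y) = binary_comb n (\<lambda>i. a * \<mu> i) X Y"
proof -
  have "smult c (\<Sum>i\<in>S. g i) = (\<Sum>i\<in>S. smult c (g i))" for c :: 'a and g and S :: "nat set"
    by (induction S rule: infinite_finite_induct) (simp_all add: smult_add_right)
  then show ?thesis by (simp add: binary_comb_def smult_smult)
qed

lemma mult_binary_comb_left:
  "X * binary_comb n \<mu> X Y = binary_comb (Suc n) (\<lambda>j. if j = 0 then 0 else \<mu> (j - 1)) X Y"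
  by (simp add: binary_comb_def sum.atMost_Suc_shift sum_distrib_left mult_ac del: sum.atMost_Suc)

lemma mult_binary_comb_right:
  "Y * binary_comb n \<mu> X Y = binary_comb (Suc n) (\<lambda>j. if j \<le> n then \<mu> j else 0) X Y"
proof -
  have "Y * binary_comb n \<mu> X Y = (\<Sum>i\<le>n. smult (of_real (\<mu> i)) (X ^ i * Y ^ (Suc n - i)))"
    by (auto simp: binary_comb_def sum_distrib_left mult_ac Suc_diff_le intro!: sum.cong)
  then show ?thesis by (simp add: binary_comb_def)
qed

lemma linear_mult_binary_comb:
  "\<exists>\<nu>. (smult (of_real a) X + smult (of_real b) Y) * binary_comb n \<mu> X Y = binary_comb (Suc n) \<nu> X Y"
  by (auto simp: algebra_simps mult_binary_comb_left mult_binary_comb_right smult_binary_comb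
      binary_comb_add)

lemma real_poly_binary_comb:
  assumes T: "[:0, 1:] = smult (of_real a) X + smult (of_real b) Y"
    and one: "1 = smult (of_real c) X + smult (of_real d) Y"
    and "degree V \<le> n" and "real_poly V"
  shows "\<exists>\<mu>. V = binary_comb n \<mu> X Y"
  using assms(3,4)
proof (induction n arbitrary: V)
  case 0
  then obtain r where "coeff V 0 = of_real r" unfolding real_poly_def by (meson Reals_cases)
  then have "V = binary_comb 0 (\<lambda>_. r) X Y"
    using 0 by (simp add: binary_comb_def) (metis degree_0_id le_zero_eq)
  then show ?case by blast
next
  case (Suc n)
  obtain a0 V' where V: "V = pCons a0 V'" by (meson pCons_cases)
  have "degree V' \<le> n" using Suc.prems(1) V by (cases "V' = 0") auto
  moreover have "real_poly V'" using Suc.prems(2) V unfolding real_poly_def by (metis coeff_pCons_Suc)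
  ultimately obtain \<mu> where \<mu>: "V' = binary_comb n \<mu> X Y" using Suc.IH by blast
  have "a0 \<in> \<real>" using Suc.prems(2) V unfolding real_poly_def by (metis coeff_pCons_0)
  then obtain r where r: "a0 = of_real r" by (meson Reals_cases)
  have "real_poly (1 :: 'a poly)" by (simp add: real_poly_def coeff_1)
  then obtain \<mu>1 where \<mu>1: "1 = binary_comb n \<mu>1 X Y" using Suc.IH[of 1] by auto
  obtain \<nu>1 where \<nu>1: "1 = binary_comb (Suc n) \<nu>1 X Y"
    using linear_mult_binary_comb[of c X d Y n \<mu>1] one \<mu>1 by auto
  obtain \<nu> where \<nu>: "[:0, 1:] * V' = binary_comb (Suc n) \<nu> X Y"
    using linear_mult_binary_comb[of a X b Y n \<mu>] T \<mu> by auto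
  have "V = smult (of_real r) 1 + [:0, 1:] * V'" using V r by simp
  then show ?case unfolding \<nu>1 \<nu> by (auto simp: smult_binary_comb binary_comb_add)
qed

lemma round_binary_comb:
  fixes X Y :: "int poly"
  assumes "degree X \<le> 1" and "degree Y \<le> 1"
  shows "\<exists>R f. degree R \<le> n \<and> (\<forall>i. \<bar>f i\<bar> \<le> 1/2) \<and>
     map_poly of_int R = binary_comb n \<mu> (map_poly of_int X) (map_poly of_int Y)
       - (binary_comb n f (map_poly of_int X) (map_poly of_int Y) :: 'a::real_normed_field poly)"
proof -
  define R where "R = (\<Sum>i\<le>n. smult (round (\<mu> i)) (X ^ i * Y ^ (n - i)))"
  define f where "f = (\<lambda>i. \<mu> i - of_int (round (\<mu> i)))"
  have "(map_poly of_int R :: 'a poly)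
      = (\<Sum>i\<le>n. smult (of_int (round (\<mu> i))) (map_poly of_int X ^ i * map_poly of_int Y ^ (n - i)))"
    unfolding R_def
    by (simp add: map_poly_of_int_sum map_poly_of_int_smult map_poly_of_int_mult map_poly_of_int_power)
  also have "\<dots> = binary_comb n \<mu> (map_poly of_int X) (map_poly of_int Y)
       - binary_comb n f (map_poly of_int X) (map_poly of_int Y)"
    unfolding binary_comb_def f_def
    by (simp add: sum_subtractf[symmetric] smult_diff_left[symmetric])
  finally have eq: "(map_poly of_int R :: 'a poly) = binary_comb n \<mu> (map_poly of_int X) (map_poly of_int Y)
       - binary_comb n f (map_poly of_int X) (map_poly of_int Y)" .
  have "\<forall>i. \<bar>f i\<bar> \<le> 1/2" unfolding f_def by (metis of_int_round_abs_le abs_minus_commute)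
  moreover have "degree R \<le> n" unfolding R_def
  proof (intro degree_sum_le)
    fix i assume "i \<in> {..n}"
    have "degree (smult (round (\<mu> i)) (X ^ i * Y ^ (n - i))) \<le> degree (X ^ i) + degree (Y ^ (n - i))"
      by (rule order.trans[OF degree_smult_le degree_mult_le])
    also have "\<dots> \<le> 1 * i + 1 * (n - i)"
      by (intro add_mono order.trans[OF degree_power_le] mult_right_mono assms) auto
    also have "\<dots> = n" using \<open>i \<in> {..n}\<close> by simp
    finally show "degree (smult (round (\<mu> i)) (X ^ i * Y ^ (n - i))) \<le> n" .
  qed auto
  ultimately show ?thesis using eq by blast
qed

lemma norm_poly_binary_comb_le:
  assumes f: "\<forall>i. \<bar>f i\<bar> \<le> 1/2" and B: "norm (poly X z) \<le> B" "norm (poly Y z) \<le> B"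
  shows "norm (poly (binary_comb n f X Y) z) \<le> (real n + 1) / 2 * B ^ n"
proof -
  have B0: "B \<ge> 0" using B(1) norm_ge_zero order.trans by blast
  have "norm (poly (binary_comb n f X Y) z) \<le> (\<Sum>i\<le>n. \<bar>f i\<bar> * norm (poly X z) ^ i * norm (poly Y z) ^ (n - i))"
    unfolding binary_comb_def poly_sum
    by (rule order.trans[OF norm_sum]) (simp add: norm_mult norm_power mult.assoc)
  also have "\<dots> \<le> (\<Sum>i\<le>n. 1/2 * B ^ i * B ^ (n - i))"
    using f B by (intro sum_mono mult_mono power_mono) (auto simp: B0)
  also have "\<dots> = (\<Sum>i\<le>n. 1/2 * B ^ n)"
    by (intro sum.cong refl) (simp add: mult.assoc power_add[symmetric])
  also have "\<dots> = (real n + 1) / 2 * B ^ n" by simp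
  finally show ?thesis .
qed

lemma poly_l1_binary_comb_le:
  assumes f: "\<forall>i. \<bar>f i\<bar> \<le> 1/2" and L: "poly_l1 X \<le> L" "poly_l1 Y \<le> L"
  shows "poly_l1 (binary_comb n f X Y) \<le> (real n + 1) / 2 * L ^ n"
proof -
  have L0: "L \<ge> 0" using L(1) poly_l1_nonneg order.trans by blast
  have "poly_l1 (binary_comb n f X Y) \<le> (\<Sum>i\<le>n. \<bar>f i\<bar> * poly_l1 (X ^ i * Y ^ (n - i)))"
    unfolding binary_comb_def by (rule order.trans[OF poly_l1_sum_le]) (simp add: poly_l1_smult)
  also have "\<dots> \<le> (\<Sum>i\<le>n. 1/2 * (L ^ i * L ^ (n - i)))"
  proof (intro sum_mono mult_mono)
    fix i
    have "poly_l1 (X ^ i * Y ^ (n - i)) \<le> poly_l1 X ^ i * poly_l1 Y ^ (n - i)"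
      by (intro order.trans[OF poly_l1_mult_le] mult_mono poly_l1_power_le) (auto simp: poly_l1_nonneg)
    also have "\<dots> \<le> L ^ i * L ^ (n - i)" using L by (intro mult_mono power_mono) (auto simp: L0 poly_l1_nonneg)
    finally show "poly_l1 (X ^ i * Y ^ (n - i)) \<le> L ^ i * L ^ (n - i)" .
  qed (use f in \<open>auto simp: poly_l1_nonneg\<close>)
  also have "\<dots> = (\<Sum>i\<le>n. 1/2 * L ^ n)"
    by (intro sum.cong refl) (simp add: power_add[symmetric])
  also have "\<dots> = (real n + 1) / 2 * L ^ n" by simp
  finally show ?thesis .
qed

section \<open>Unimodular bases of good approximations\<close>

locale approximation_basis =
  fixes \<xi> C Q :: real and p q p' q' :: int
  assumes det: "p * q' - p' * q = 1" and q_pos: "q > 0"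
    and C_ge_1: "C \<ge> 1" and Q_gt_C: "Q > C"
    and q_le: "\<bar>real_of_int q\<bar> \<le> C * Q" and q'_le: "\<bar>real_of_int q'\<bar> \<le> C * Q"
    and approx: "\<bar>of_int q * \<xi> - of_int p\<bar> \<le> C / Q" and approx': "\<bar>of_int q' * \<xi> - of_int p'\<bar> \<le> C / Q"

lemma coprime_unimodular_completion:
  fixes h k :: int
  assumes "coprime h k" and "k > 0"
  obtains p' q' where "h * q' - p' * k = 1" and "0 \<le> q'" and "q' < k"
proof -
  obtain u v where uv: "u * h + v * k = 1"
    using assms(1) by (metis bezout_int coprime_iff_gcd_eq_1)
  define t where "t = u div k"
  have "h * (u mod k) - (- v - t * h) * k = 1"
    using uv by (simp add: t_def minus_div_mult_eq_mod[symmetric] algebra_simps)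
  moreover have "0 \<le> u mod k" "u mod k < k" using assms(2) by auto
  ultimately show ?thesis using that by blast
qed

lemma unimodular_partner_approx:
  fixes h k p' q' :: int and \<xi> :: real
  assumes det: "h * q' - p' * k = 1" and "0 \<le> q'" and "q' \<le> k"
  shows "\<bar>of_int q' * \<xi> - of_int p'\<bar> \<le> \<bar>of_int k * \<xi> - of_int h\<bar> + 1 / of_int k"
proof -
  define l where "l = of_int k * \<xi> - of_int h"
  have k_pos: "real_of_int k > 0" using det assms(2,3) by (cases "k = 0") auto
  have "(of_int q' * \<xi> - of_int p') * of_int k = l * of_int q' + 1"
    using arg_cong[OF det, of real_of_int] by (simp add: l_def algebra_simps)
  then have "\<bar>of_int q' * \<xi> - of_int p'\<bar> * of_int k = \<bar>l * of_int q' + 1\<bar>"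
    using k_pos by (metis abs_mult abs_of_pos)
  also have "\<dots> \<le> \<bar>l\<bar> * of_int k + 1"
    using assms(2,3) by (simp add: abs_mult abs_triangle_ineq[THEN order.trans] mult_left_mono)
  finally show ?thesis using k_pos by (simp add: l_def field_simps)
qed

lemma badly_approximable_basis:
  assumes "badly_approximable \<xi>"
  obtains C where "C \<ge> 1" and "\<And>Q. Q > C \<Longrightarrow> \<exists>p q p' q'. approximation_basis \<xi> C Q p q p' q'"
proof -
  from assms obtain c :: real where c: "c > 0"
    and bad: "\<And>p q::int. q \<ge> 1 \<Longrightarrow> c / (real_of_int q)^2 \<le> \<bar>\<xi> - real_of_int p / real_of_int q\<bar>"
    unfolding badly_approximable_def by blast
  define C where "C = max 2 (1 + 1/c)"
  have "\<exists>p q p' q'. approximation_basis \<xi> C Q p q p' q'" if "Q > C" for Q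
  proof -
    have Q: "Q \<ge> 1" using that unfolding C_def by linarith
    define N where "N = nat \<lceil>Q\<rceil>"
    have N0: "N > 0" and NQ: "Q \<le> real N" and NQ2: "real N \<le> 2 * Q" using Q N_def by linarith+
    obtain h k where hk: "coprime h k" "0 < k" "k \<le> int N" "\<bar>of_int k * \<xi> - of_int h\<bar> < 1 / N"
      using Dirichlet_approx_coprime[OF N0] by blast
    obtain p' q' where pq': "h * q' - p' * k = 1" "0 \<le> q'" "q' < k"
      using coprime_unimodular_completion[OF hk(1,2)] .
    have "c / real_of_int k \<le> \<bar>of_int k * \<xi> - of_int h\<bar>"
      using bad[of k h] hk(2) by (simp add: field_simps power2_eq_square abs_div abs_mult)
    then have "c / real_of_int k < 1 / N" using hk(4) by linarith
    then have "c * N < real_of_int k" using hk(2) N0 by (simp add: field_simps)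
    then have k_large: "1 / real_of_int k < 1 / (c * N)" using c N0 by (intro frac_less2) auto
    have "\<bar>of_int q' * \<xi> - of_int p'\<bar> \<le> \<bar>of_int k * \<xi> - of_int h\<bar> + 1 / of_int k"
      using unimodular_partner_approx pq' by simp
    also have "\<dots> \<le> 1 / N + 1 / (c * N)" using hk(4) k_large by simp
    also have "\<dots> = (1 + 1 / c) / N" using c N0 by (simp add: field_simps)
    also have "\<dots> \<le> C / Q" unfolding C_def using Q NQ c by (intro frac_le) auto
    finally have approx': "\<bar>of_int q' * \<xi> - of_int p'\<bar> \<le> C / Q" .
    have "\<bar>of_int k * \<xi> - of_int h\<bar> \<le> 1 / N" using hk(4) by simp
    also have "\<dots> \<le> C / Q" unfolding C_def using NQ Q by (intro frac_le) auto
    finally have approx: "\<bar>of_int k * \<xi> - of_int h\<bar> \<le> C / Q" .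
    have "\<bar>real_of_int k\<bar> \<le> 2 * Q" using hk(2,3) NQ2 by simp
    also have "\<dots> \<le> C * Q" unfolding C_def using Q by (intro mult_right_mono) auto
    finally have k_le: "\<bar>real_of_int k\<bar> \<le> C * Q" .
    have "approximation_basis \<xi> C Q h k p' q'"
      by unfold_locales (use pq' hk(2) approx approx' k_le that C_def in auto)
    then show ?thesis by blast
  qed
  moreover have "C \<ge> 1" unfolding C_def by simp
  ultimately show ?thesis using that by blast
qed

lemma norm_poly_linear_form_le:
  fixes a b :: int and \<xi> :: real and z :: complex
  shows "norm (poly (map_poly of_int [:-a, b:]) z) \<le> \<bar>real_of_int b\<bar> * norm (z - of_real \<xi>) + \<bar>of_int b * \<xi> - of_int a\<bar>"
proof -
  have "poly (map_poly of_int [:-a, b:]) z = of_int b * (z - of_real \<xi>) + of_real (of_int b * \<xi> - of_int a)"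
    by (simp add: map_poly_of_int_pCons algebra_simps)
  then show ?thesis by (metis norm_triangle_ineq norm_mult norm_of_real norm_of_int)
qed

lemma poly_l1_linear_form_le:
  fixes a b :: int and \<xi> :: real
  shows "poly_l1 (map_poly of_int [:-a, b:] :: complex poly) \<le> \<bar>real_of_int b\<bar> * (\<bar>\<xi>\<bar> + 1) + \<bar>of_int b * \<xi> - of_int a\<bar>"
proof -
  have "\<bar>real_of_int a\<bar> \<le> \<bar>real_of_int b\<bar> * \<bar>\<xi>\<bar> + \<bar>of_int b * \<xi> - of_int a\<bar>"
    by (metis abs_mult abs_minus_commute abs_triangle_ineq2 add.commute diff_le_eq)
  then show ?thesis by (simp add: map_poly_of_int_pCons poly_l1_linear algebra_simps)
qed

context approximation_basis
begin

lemma Q_pos: "Q > 0" and Q_ge_1: "Q \<ge> 1"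
  using C_ge_1 Q_gt_C by auto

definition lin :: "int poly" where
  "lin = [:-p, q:]"

definition lin' :: "int poly" where
  "lin' = [:-p', q':]"

definition rounding_error :: "nat \<Rightarrow> (nat \<Rightarrow> real) \<Rightarrow> complex poly" where
  "rounding_error n f = binary_comb n f (map_poly of_int lin') (map_poly of_int lin)"

lemma real_poly_rounding:
  assumes "degree V \<le> n" and "real_poly V"
  shows "\<exists>R f. degree R \<le> n \<and> (\<forall>i. \<bar>f i\<bar> \<le> 1/2) \<and> map_poly of_int R = V - rounding_error n f"
proof -
  have det': "complex_of_int (p * q' - p' * q) = 1" using det by simp
  have "[:0, 1:] = smult (of_real (of_int p)) (map_poly of_int lin' :: complex poly)
      + smult (of_real (of_int (- p'))) (map_poly of_int lin)"
    and "1 = smult (of_real (of_int q)) (map_poly of_int lin' :: complex poly)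
      + smult (of_real (of_int (- q'))) (map_poly of_int lin)"
    using det' by (simp_all add: lin_def lin'_def map_poly_of_int_pCons algebra_simps one_pCons)
  from real_poly_binary_comb[OF this assms] obtain \<mu> where
    "V = binary_comb n \<mu> (map_poly of_int lin') (map_poly of_int lin)" by blast
  moreover have "degree lin \<le> 1" "degree lin' \<le> 1" by (simp_all add: lin_def lin'_def)
  ultimately show ?thesis
    using round_binary_comb[where 'a=complex, of lin' lin n \<mu>] unfolding rounding_error_def by simp
qed

text \<open>Rounding into the coset \<open>P\<^sub>0 + m \<int>[x]\<close> instead of \<open>\<int>[x]\<close> fixes the coefficients
  modulo \<open>m\<close>; with \<open>m = 4\<close> this is how Eisenstein's criterion at 2 is enforced.\<close>

lemma rounding_with_residues:
  fixes P0 :: "int poly" and m :: int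
  assumes "degree V \<le> n" and "real_poly V" and "degree P0 \<le> n" and "m \<noteq> 0"
  shows "\<exists>R f. degree R \<le> n \<and> (\<forall>i. \<bar>f i\<bar> \<le> 1/2) \<and>
    map_poly of_int (P0 + smult m R) = V - smult (of_int m) (rounding_error n f)"
proof -
  define W where "W = smult (of_real (1 / of_int m)) (V - map_poly of_int P0)"
  have "degree W \<le> n" unfolding W_def
    using assms(1,3) by (intro order.trans[OF degree_smult_le] degree_diff_le) auto
  moreover have "real_poly W" unfolding W_def
    by (intro real_poly_smult real_poly_diff assms(2) real_poly_of_int)
  ultimately obtain R f where R: "degree R \<le> n" "\<forall>i. \<bar>f i\<bar> \<le> 1/2"
    and eq: "map_poly of_int R = W - rounding_error n f"
    using real_poly_rounding by blast
  have "map_poly of_int (P0 + smult m R) = map_poly of_int P0 + smult (of_int m) (map_poly of_int R :: complex poly)"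
    by (simp add: map_poly_of_int_add map_poly_of_int_smult)
  also have "\<dots> = map_poly of_int P0 + smult (of_int m) W - smult (of_int m) (rounding_error n f)"
    by (simp add: eq smult_diff_right)
  also have "smult (of_int m) W = V - map_poly of_int P0"
    using assms(4) by (simp add: W_def smult_smult)
  finally have "map_poly of_int (P0 + smult m R) = V - smult (of_int m) (rounding_error n f)"
    by simp
  then show ?thesis using R by (intro exI[of _ R] exI[of _ f]) simp
qed

lemma norm_poly_good_form_le:
  fixes a b :: int and z :: complex
  assumes "\<bar>real_of_int b\<bar> \<le> C * Q" and "\<bar>of_int b * \<xi> - of_int a\<bar> \<le> C / Q"
    and far: "norm (z - of_real \<xi>) \<ge> 1 / Q^2"
  shows "norm (poly (map_poly of_int [:-a, b:]) z) \<le> 2 * C * Q * norm (z - of_real \<xi>)"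
proof -
  have "C / Q = C * Q * (1 / Q^2)" using Q_pos by (simp add: power2_eq_square field_simps)
  also have "\<dots> \<le> C * Q * norm (z - of_real \<xi>)" using far C_ge_1 Q_pos by (intro mult_left_mono) auto
  finally have "\<bar>of_int b * \<xi> - of_int a\<bar> \<le> C * Q * norm (z - of_real \<xi>)" using assms(2) by linarith
  moreover have "\<bar>real_of_int b\<bar> * norm (z - of_real \<xi>) \<le> C * Q * norm (z - of_real \<xi>)"
    using assms(1) by (intro mult_right_mono) auto
  ultimately show ?thesis using norm_poly_linear_form_le[of a b z \<xi>] by linarith
qed

lemma poly_l1_good_form_le:
  fixes a b :: int
  assumes "\<bar>real_of_int b\<bar> \<le> C * Q" and "\<bar>of_int b * \<xi> - of_int a\<bar> \<le> C / Q"
  shows "poly_l1 (map_poly of_int [:-a, b:] :: complex poly) \<le> C * Q * (\<bar>\<xi>\<bar> + 2)"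
proof -
  have "C / Q \<le> C" "C \<le> C * Q" using C_ge_1 Q_ge_1 by (simp_all add: divide_le_eq mult_le_cancel_left1)
  then have "C / Q \<le> C * Q" by linarith
  then have "\<bar>real_of_int b\<bar> * (\<bar>\<xi>\<bar> + 1) + \<bar>of_int b * \<xi> - of_int a\<bar> \<le> C * Q * (\<bar>\<xi>\<bar> + 1) + C * Q"
    using assms by (intro add_mono mult_right_mono) auto
  then show ?thesis using poly_l1_linear_form_le[of a b \<xi>] by (simp add: algebra_simps)
qed

lemma norm_rounding_error_le:
  assumes "\<forall>i. \<bar>f i\<bar> \<le> 1/2" and "norm (z - of_real \<xi>) \<ge> 1 / Q^2"
  shows "norm (poly (rounding_error n f) z) \<le> (real n + 1) / 2 * (2 * C) ^ n * Q ^ n * norm (z - of_real \<xi>) ^ n"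
proof -
  have "norm (poly (rounding_error n f) z) \<le> (real n + 1) / 2 * (2 * C * Q * norm (z - of_real \<xi>)) ^ n"
    unfolding rounding_error_def lin_def lin'_def using assms
    by (intro norm_poly_binary_comb_le norm_poly_good_form_le q_le q'_le approx approx') auto
  then show ?thesis by (simp add: power_mult_distrib mult_ac)
qed

lemma poly_l1_rounding_error_le:
  assumes "\<forall>i. \<bar>f i\<bar> \<le> 1/2"
  shows "poly_l1 (rounding_error n f) \<le> (real n + 1) / 2 * (C * (\<bar>\<xi>\<bar> + 2)) ^ n * Q ^ n"
proof -
  have "poly_l1 (rounding_error n f) \<le> (real n + 1) / 2 * (C * Q * (\<bar>\<xi>\<bar> + 2)) ^ n"
    unfolding rounding_error_def lin_def lin'_def using assms
    by (intro poly_l1_binary_comb_le poly_l1_good_form_le q_le q'_le approx approx') auto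
  then show ?thesis by (simp add: power_mult_distrib mult_ac)
qed

end

section \<open>Algebraic numbers of degree n with all conjugates close to \<xi>\<close>

context approximation_basis
begin

lemma exists_odd_approximation:
  obtains a b :: int where "b \<noteq> 0" and "odd a"
    and "\<bar>real_of_int b\<bar> \<le> C * Q" and "\<bar>of_int b * \<xi> - of_int a\<bar> \<le> C / Q"
proof (cases "odd p")
  case True
  then show ?thesis using that[of q p] q_pos q_le approx by simp
next
  case False
  have "odd (p * q' - p' * q)" using det by simp
  then have "odd p'" using False by simp
  moreover have "q' \<noteq> 0"
  proof
    assume "q' = 0"
    then have "p' * (- q) = 1" using det by simp
    then have "p' = 1 \<or> p' = -1" by (simp only: zmult_eq_1_iff) auto
    then have "\<bar>of_int q' * \<xi> - of_int p'\<bar> = 1" using \<open>q' = 0\<close> by auto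
    then show False using approx' Q_gt_C C_ge_1 by (simp add: field_simps)
  qed
  ultimately show ?thesis using that[of q' p'] q'_le approx' by simp
qed

text \<open>The odd numerator makes the homogenised value \<open>b\<^sup>n P(a/b)\<close> odd, hence a nonzero integer.\<close>

lemma lead_coeff_ge_if_roots_close:
  assumes "eisenstein_at_2 P"
    and close: "\<And>z::complex. poly (map_poly of_int P) z = 0 \<Longrightarrow> norm (z - of_real \<xi>) < 1 / Q^2"
  shows "(Q / (2 * C)) ^ degree P \<le> \<bar>real_of_int (lead_coeff P)\<bar>"
proof -
  obtain a b :: int where ab: "b \<noteq> 0" "odd a"
    "\<bar>real_of_int b\<bar> \<le> C * Q" "\<bar>of_int b * \<xi> - of_int a\<bar> \<le> C / Q"
    by (rule exists_odd_approximation)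
  have "norm (of_int a - of_int b * z) \<le> 2 * C / Q" if "poly (map_poly of_int P) z = 0" for z :: complex
  proof -
    have "of_int a - of_int b * z = - (of_real (of_int b * \<xi> - of_int a) + of_int b * (z - of_real \<xi>))"
      by (simp add: algebra_simps)
    then have "norm (of_int a - of_int b * z) \<le> \<bar>of_int b * \<xi> - of_int a\<bar> + \<bar>real_of_int b\<bar> * norm (z - of_real \<xi>)"
      by (metis norm_minus_cancel norm_triangle_ineq norm_mult norm_of_real norm_of_int)
    also have "\<dots> \<le> C / Q + C * Q * (1 / Q^2)"
      using ab close[OF that] by (intro add_mono mult_mono) auto
    also have "\<dots> = 2 * C / Q" using Q_pos by (simp add: power2_eq_square field_simps)
    finally show ?thesis .
  qed
  moreover have "(\<Sum>k\<le>degree P. coeff P k * a ^ k * b ^ (degree P - k)) \<noteq> 0"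
    using odd_homogenization[OF assms(1) ab(2), of b] by auto
  ultimately have "1 \<le> \<bar>real_of_int (lead_coeff P)\<bar> * (2 * C / Q) ^ degree P"
    using liouville_lower_bound[OF ab(1)] by blast
  then show ?thesis using C_ge_1 Q_pos by (simp add: power_divide field_simps)
qed

lemma exists_eisenstein_near_power:
  assumes "n \<ge> 1"
  obtains P f where "degree P = n" and "eisenstein_at_2 P" and "\<forall>i. \<bar>f i\<bar> \<le> 1/2"
    and "map_poly of_int P = smult (of_real A) ([:- of_real \<xi>, 1:] ^ n) - smult 4 (rounding_error n f)"
proof -
  define V :: "complex poly" where "V = smult (of_real A) ([:- of_real \<xi>, 1:] ^ n)"
  define P0 :: "int poly" where "P0 = monom 1 n + [:2:]"
  have "degree V \<le> n" unfolding V_def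
    by (rule order.trans[OF degree_smult_le]) (simp add: degree_power_eq)
  moreover have "real_poly V" unfolding V_def
    using real_poly_linear[of "-\<xi>" 1] by (intro real_poly_smult real_poly_power) simp
  moreover have "degree P0 \<le> n" unfolding P0_def by (intro degree_add_le) (auto simp: degree_monom_le)
  ultimately obtain R f where R: "degree R \<le> n" "\<forall>i. \<bar>f i\<bar> \<le> 1/2"
    and eq: "map_poly of_int (P0 + smult 4 R) = V - smult 4 (rounding_error n f)"
    using rounding_with_residues[of V n P0 4] by auto
  define P where "P = P0 + smult 4 R"
  have cP: "coeff P k = (if k = n then 1 else 0) + (if k = 0 then 2 else 0) + 4 * coeff R k" for k
    unfolding P_def P0_def by (simp add: coeff_monom coeff_pCons split: nat.split)
  have "degree P = n"
  proof (rule antisym)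
    show "degree P \<le> n" unfolding P_def
      using \<open>degree P0 \<le> n\<close> R(1) by (intro degree_add_le order.trans[OF degree_smult_le]) auto
    have "coeff P n \<noteq> 0" using cP[of n] assms by presburger
    then show "n \<le> degree P" by (rule le_degree)
  qed
  moreover have "eisenstein_at_2 P"
    unfolding eisenstein_at_2_def using cP assms \<open>degree P = n\<close> by auto
  ultimately show ?thesis using that R(2) eq unfolding P_def V_def by simp
qed

lemma roots_close_of_near_power:
  fixes z :: complex
  assumes f: "\<forall>i. \<bar>f i\<bar> \<le> 1/2" and A: "A > 2 * (real n + 1) * (2 * C) ^ n * Q ^ n"
    and P: "map_poly of_int P = smult (of_real A) ([:- of_real \<xi>, 1:] ^ n) - smult 4 (rounding_error n f)"
    and z: "poly (map_poly of_int P) z = 0"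
  shows "norm (z - of_real \<xi>) < 1 / Q^2"
proof (rule ccontr)
  define \<rho> where "\<rho> = norm (z - of_real \<xi>)"
  assume "\<not> ?thesis"
  then have far: "\<rho> \<ge> 1 / Q^2" unfolding \<rho>_def by simp
  then have "\<rho> > 0" using Q_pos by (smt (verit) divide_pos_pos zero_less_power)
  have A_pos: "A > 0" using A Q_pos C_ge_1 by (smt (verit) mult_nonneg_nonneg of_nat_0_le_iff zero_le_power)
  have "of_real A * (z - of_real \<xi>) ^ n = 4 * poly (rounding_error n f) z"
    using z unfolding P by simp
  then have "A * \<rho> ^ n = norm (4 * poly (rounding_error n f) z)"
    using A_pos unfolding \<rho>_def by (metis norm_mult norm_of_real norm_power abs_of_pos)
  also have "\<dots> \<le> 4 * ((real n + 1) / 2 * (2 * C) ^ n * Q ^ n * \<rho> ^ n)"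
    unfolding norm_mult \<rho>_def using norm_rounding_error_le[OF f, of z n] far[unfolded \<rho>_def]
    by (simp add: mult_ac)
  also have "\<dots> = (2 * (real n + 1) * (2 * C) ^ n * Q ^ n) * \<rho> ^ n" by simp
  also have "\<dots> < A * \<rho> ^ n" using A \<open>\<rho> > 0\<close> by (intro mult_strict_right_mono) auto
  finally show False by simp
qed

lemma poly_height_le_of_near_power:
  assumes f: "\<forall>i. \<bar>f i\<bar> \<le> 1/2" and "A \<ge> 0"
    and P: "map_poly of_int P = smult (of_real A) ([:- of_real \<xi>, 1:] ^ n) - smult 4 (rounding_error n f)"
  shows "real_of_int (poly_height P) \<le> A * (1 + \<bar>\<xi>\<bar>) ^ n + 2 * (real n + 1) * (C * (\<bar>\<xi>\<bar> + 2)) ^ n * Q ^ n"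
proof -
  have "real_of_int (poly_height P) \<le> poly_l1 (map_poly of_int P :: complex poly)" by (rule poly_height_le_poly_l1)
  also have "\<dots> \<le> poly_l1 (smult (of_real A) ([:- of_real \<xi>, 1:] ^ n) :: complex poly)
      + poly_l1 (smult 4 (rounding_error n f))"
    unfolding P by (rule poly_l1_diff_le)
  also have "\<dots> \<le> A * (1 + \<bar>\<xi>\<bar>) ^ n + 4 * ((real n + 1) / 2 * (C * (\<bar>\<xi>\<bar> + 2)) ^ n * Q ^ n)"
  proof (intro add_mono)
    show "poly_l1 (smult (of_real A) ([:- of_real \<xi>, 1:] ^ n) :: complex poly) \<le> A * (1 + \<bar>\<xi>\<bar>) ^ n"
      using poly_l1_power_le[of "[:- of_real \<xi>, 1:] :: complex poly" n] \<open>A \<ge> 0\<close>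
      by (simp add: poly_l1_smult poly_l1_linear add.commute mult_left_mono)
    show "poly_l1 (smult 4 (rounding_error n f)) \<le> 4 * ((real n + 1) / 2 * (C * (\<bar>\<xi>\<bar> + 2)) ^ n * Q ^ n)"
      using poly_l1_rounding_error_le[OF f, of n] by (simp add: poly_l1_smult mult_ac)
  qed
  also have "4 * ((real n + 1) / 2 * (C * (\<bar>\<xi>\<bar> + 2)) ^ n * Q ^ n) = 2 * (real n + 1) * (C * (\<bar>\<xi>\<bar> + 2)) ^ n * Q ^ n"
    by simp
  finally show ?thesis by simp
qed

lemma exists_algebraic_conjugates_close:
  assumes "n \<ge> 1"
  shows "\<exists>\<alpha>. is_algebraic \<alpha> \<and> alg_degree \<alpha> = n \<and>
     (\<forall>\<beta>\<in>conjugates \<alpha>. cmod (complex_of_real \<xi> - \<beta>) < 1 / Q^2) \<and>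
     (Q / (2 * C)) ^ n \<le> real_of_int (alg_height \<alpha>) \<and>
     real_of_int (alg_height \<alpha>)
       \<le> ((2 * (real n + 1) * (2 * C) ^ n + 1) * (1 + \<bar>\<xi>\<bar>) ^ n + 2 * (real n + 1) * (C * (\<bar>\<xi>\<bar> + 2)) ^ n) * Q ^ n"
proof -
  define A where "A = (2 * (real n + 1) * (2 * C) ^ n + 1) * Q ^ n"
  obtain P f where dP: "degree P = n" and eis: "eisenstein_at_2 P" and f: "\<forall>i. \<bar>f i\<bar> \<le> 1/2"
    and P: "map_poly of_int P = smult (of_real A) ([:- of_real \<xi>, 1:] ^ n) - smult 4 (rounding_error n f)"
    by (rule exists_eisenstein_near_power[OF assms])
  have A_large: "A > 2 * (real n + 1) * (2 * C) ^ n * Q ^ n" unfolding A_def using Q_pos by (simp add: algebra_simps)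
  moreover have "0 \<le> 2 * (real n + 1) * (2 * C) ^ n * Q ^ n" using C_ge_1 Q_pos by simp
  ultimately have A_pos: "A > 0" by linarith
  note close = roots_close_of_near_power[OF f A_large P]
  obtain d Pm where PPm: "P = smult d Pm" and d: "d \<noteq> 0" and "eisenstein_at_2 Pm"
    and irr: "irreducible Pm" and lc: "lead_coeff Pm > 0"
    by (rule eisenstein_at_2_normalize[OF eis])
  have dPm: "degree Pm = n" using PPm d dP by simp
  have roots: "poly (map_poly of_int Pm) z = 0 \<longleftrightarrow> poly (map_poly of_int P) z = 0" for z :: complex
    using d by (simp add: PPm map_poly_of_int_smult)
  obtain \<alpha> :: complex where \<alpha>: "poly (map_poly of_int Pm) \<alpha> = 0"
    by (rule int_poly_has_root[of Pm]) (use dPm assms in auto)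
  note alg = algebraic_number_of_irreducible[OF irr lc \<alpha>]
  have "(Q / (2 * C)) ^ degree Pm \<le> \<bar>real_of_int (lead_coeff Pm)\<bar>"
  proof (rule lead_coeff_ge_if_roots_close[OF \<open>eisenstein_at_2 Pm\<close>])
    fix z :: complex
    assume "poly (map_poly of_int Pm) z = 0"
    then show "norm (z - of_real \<xi>) < 1 / Q^2" using close roots by blast
  qed
  then have "(Q / (2 * C)) ^ n \<le> \<bar>real_of_int (lead_coeff Pm)\<bar>" using dPm by simp
  also have "\<dots> \<le> real_of_int (poly_height Pm)" by (simp only: of_int_abs[symmetric] of_int_le_iff abs_coeff_le_poly_height)
  finally have low: "(Q / (2 * C)) ^ n \<le> real_of_int (poly_height Pm)" .
  have "real_of_int (poly_height Pm) \<le> real_of_int (poly_height P)"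
    using PPm d poly_height_le_smult by simp
  also have "\<dots> \<le> A * (1 + \<bar>\<xi>\<bar>) ^ n + 2 * (real n + 1) * (C * (\<bar>\<xi>\<bar> + 2)) ^ n * Q ^ n"
    using poly_height_le_of_near_power[OF f _ P] A_pos by simp
  also have "\<dots> = ((2 * (real n + 1) * (2 * C) ^ n + 1) * (1 + \<bar>\<xi>\<bar>) ^ n + 2 * (real n + 1) * (C * (\<bar>\<xi>\<bar> + 2)) ^ n) * Q ^ n"
    unfolding A_def by (simp add: algebra_simps)
  finally show ?thesis using alg low dPm close roots
    by (auto simp: norm_minus_commute)
qed

end

section \<open>Polynomials with all but one root close to a point\<close>

lemma far_roots_arith:
  fixes r A F :: real and s l n :: nat
  assumes r: "0 < r" "r \<le> 1" and "A > 0" and sl: "s + l = n + 1" and "l \<ge> 2"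
    and far_low: "A / 2 ^ (n + 2) \<le> F"
    and far_up: "r ^ s * (F / 2 ^ l) \<le> 3 * A * (2 * r) ^ n"
  shows "1 \<le> 3 * 2 ^ (3 * n + 3) * r"
proof -
  define X where "X = r ^ (n - 1) * (A / 2 ^ (n + 2) / 2 ^ (n + 1))"
  have "0 < A / 2 ^ (n + 2)" using \<open>A > 0\<close> by simp
  then have "0 \<le> F" using far_low by linarith
  have "r ^ (n - 1) \<le> r ^ s" using sl \<open>l \<ge> 2\<close> r by (intro power_decreasing) auto
  moreover have "(2::real) ^ l \<le> 2 ^ (n + 1)" using sl by (intro power_increasing) auto
  ultimately have "X \<le> r ^ s * (F / 2 ^ l)" unfolding X_def
    using far_low r \<open>A > 0\<close> \<open>0 \<le> F\<close> by (intro mult_mono frac_le divide_right_mono) auto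
  also have "\<dots> \<le> 3 * A * (2 * r) ^ n" by (rule far_up)
  also have "\<dots> = X * (3 * 2 ^ (3 * n + 3) * r)"
  proof -
    have "n \<ge> 1" using sl \<open>l \<ge> 2\<close> by linarith
    then have "r ^ n = r ^ (n - 1) * r" by (cases n) (simp_all add: mult.commute)
    moreover have "(2::real) ^ (3 * n + 3) = 2 ^ (n + 2) * 2 ^ (n + 1) * 2 ^ n"
    proof -
      have "3 * n + 3 = (n + 2) + (n + 1) + n" by simp
      then show ?thesis by (simp only: power_add)
    qed
    ultimately show ?thesis by (simp add: X_def power_mult_distrib)
  qed
  finally have "X \<le> X * (3 * 2 ^ (3 * n + 3) * r)" .
  moreover have "X > 0" unfolding X_def using r \<open>A > 0\<close> by simp
  ultimately show ?thesis by (simp add: mult_le_cancel_left1)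
qed

lemma dist_triangle_centered:
  fixes w z c :: complex
  shows "norm (w - c) - norm (z - c) \<le> norm (w - z)" and "norm (z - c) - norm (w - c) \<le> norm (w - z)"
    and "norm (w - z) \<le> norm (w - c) + norm (z - c)"
  using norm_triangle_ineq2[of "w - c" "z - c"] norm_triangle_ineq3[of "w - c" "z - c"]
    norm_triangle_ineq4[of "w - c" "z - c"] by (simp_all add: norm_minus_commute)

lemma prod_dist_le_far_prod:
  fixes root :: "nat \<Rightarrow> complex" and c w :: complex
  assumes "\<And>i. i \<in> S \<Longrightarrow> norm (root i - c) < 1" and "\<And>i. i \<in> L \<Longrightarrow> norm (root i - c) \<ge> 1"
    and "norm (w - c) = 1"
  shows "(\<Prod>i\<in>S. norm (w - root i)) * (\<Prod>i\<in>L. norm (w - root i))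
    \<le> 2 ^ (card S + card L) * (\<Prod>i\<in>L. norm (root i - c))"
proof -
  have "(\<Prod>i\<in>S. norm (w - root i)) * (\<Prod>i\<in>L. norm (w - root i)) \<le> (\<Prod>i\<in>S. 2) * (\<Prod>i\<in>L. 2 * norm (root i - c))"
    using assms dist_triangle_centered(3)[where w=w and c=c]
    by (intro mult_mono prod_mono conjI) (force intro: order.trans simp: prod_nonneg)+
  also have "\<dots> = 2 ^ (card S + card L) * (\<Prod>i\<in>L. norm (root i - c))"
    by (simp add: prod.distrib power_add)
  finally show ?thesis .
qed

lemma prod_dist_ge_far_prod:
  fixes root :: "nat \<Rightarrow> complex" and c w :: complex
  assumes "\<And>i. i \<in> S \<Longrightarrow> norm (root i - c) < r" and "\<And>i. i \<in> L \<Longrightarrow> norm (root i - c) \<ge> 4 * r"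
    and "norm (w - c) = 2 * r" and "r > 0"
  shows "r ^ card S * ((\<Prod>i\<in>L. norm (root i - c)) / 2 ^ card L)
    \<le> (\<Prod>i\<in>S. norm (w - root i)) * (\<Prod>i\<in>L. norm (w - root i))"
proof -
  have "r ^ card S * ((\<Prod>i\<in>L. norm (root i - c)) / 2 ^ card L) = (\<Prod>i\<in>S. r) * (\<Prod>i\<in>L. norm (root i - c) / 2)"
    by (simp add: prod_dividef)
  also have "\<dots> \<le> (\<Prod>i\<in>S. norm (w - root i)) * (\<Prod>i\<in>L. norm (w - root i))"
  proof (intro mult_mono prod_mono conjI)
    fix i assume "i \<in> S"
    then show "r \<le> norm (w - root i)" using dist_triangle_centered(1)[where w=w and z="root i" and c=c] assms(1,3) by force
  next
    fix i assume "i \<in> L"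
    then show "norm (root i - c) / 2 \<le> norm (w - root i)"
      using dist_triangle_centered(2)[where w=w and z="root i" and c=c] assms(2,3) by force
  qed (use assms(4) in \<open>auto simp: prod_nonneg\<close>)
  finally show ?thesis .
qed

text \<open>At most one root is far from \<open>c\<close>: two far roots would make the product at \<open>c + 2r\<close>
  too large compared with its value at \<open>c + 1\<close>.\<close>

lemma all_but_one_root_near:
  fixes root :: "nat \<Rightarrow> complex" and c :: complex and r A :: real
  assumes annulus: "\<And>i. i < n + 1 \<Longrightarrow> norm (root i - c) < r \<or> norm (root i - c) > A / 2"
    and r: "0 < r" "r \<le> 1" and A: "A \<ge> 8"
    and at_1: "A / 2 \<le> (\<Prod>i<n+1. norm (c + 1 - root i))"
    and at_2r: "(\<Prod>i<n+1. norm (c + of_real (2 * r) - root i)) \<le> 3 * A * (2 * r) ^ n"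
    and small: "3 * 2 ^ (3 * n + 3) * r < 1"
  obtains i0 where "i0 < n + 1" and "\<And>i. i < n + 1 \<Longrightarrow> i \<noteq> i0 \<Longrightarrow> norm (root i - c) < r"
proof -
  define S where "S = {i. i < n + 1 \<and> norm (root i - c) < r}"
  define L where "L = {i. i < n + 1 \<and> r \<le> norm (root i - c)}"
  have split: "{..<n+1} = S \<union> L" "S \<inter> L = {}" "finite S" "finite L"
    unfolding S_def L_def by auto
  then have card: "card S + card L = n + 1"
    using card_Un_disjoint[of S L] card_lessThan[of "n + 1"] by simp
  have prod_split: "(\<Prod>i<n+1. g i) = (\<Prod>i\<in>S. g i) * (\<Prod>i\<in>L. g i)" for g :: "nat \<Rightarrow> real"
    unfolding split(1) by (rule prod.union_disjoint[OF split(3,4,2)])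
  have "card L \<le> 1"
  proof (rule ccontr)
    assume "\<not> card L \<le> 1"
    have far: "norm (root i - c) > A / 2" if "i \<in> L" for i
      using annulus[of i] that unfolding L_def by auto
    have near: "norm (root i - c) < r" if "i \<in> S" for i using that unfolding S_def by simp
    have "1 \<le> A / 2" "4 * r \<le> A / 2" using A r by simp_all
    then have far': "norm (root i - c) \<ge> 1" "norm (root i - c) \<ge> 4 * r" if "i \<in> L" for i
      using far[OF that] by simp_all
    have "A / 2 \<le> 2 ^ (card S + card L) * (\<Prod>i\<in>L. norm (root i - c))"
      using near r by (intro order.trans[OF at_1[unfolded prod_split] prod_dist_le_far_prod])
        (auto intro: far' less_le_trans)
    then have "A / 2 ^ (n + 2) \<le> (\<Prod>i\<in>L. norm (root i - c))" using card by (simp add: field_simps)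
    moreover have "r ^ card S * ((\<Prod>i\<in>L. norm (root i - c)) / 2 ^ card L) \<le> 3 * A * (2 * r) ^ n"
      using near r by (intro order.trans[OF prod_dist_ge_far_prod at_2r[unfolded prod_split]]) (auto intro: far')
    ultimately have "1 \<le> 3 * 2 ^ (3 * n + 3) * r"
      by (intro far_roots_arith[OF r _ card]) (use A \<open>\<not> card L \<le> 1\<close> in auto)
    then show False using small by simp
  qed
  show ?thesis
  proof (cases "L = {}")
    case True
    then have "norm (root i - c) < r" if "i < n + 1" for i
      using True that unfolding L_def by (auto simp: not_le)
    then show ?thesis using that[of 0] by simp
  next
    case False
    then obtain j where j: "j \<in> L" by blast
    then have "\<forall>i\<in>L. i = j" using card_le_Suc0_iff_eq[OF split(4)] \<open>card L \<le> 1\<close> by auto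
    then have "norm (root i - c) < r" if "i < n + 1" "i \<noteq> j" for i
      using that unfolding L_def by (auto simp: not_le)
    moreover have "j < n + 1" using j unfolding L_def by simp
    ultimately show ?thesis using that by blast
  qed
qed

section \<open>Algebraic integers of degree n + 1 with all but one conjugate close to \<xi>\<close>

context approximation_basis
begin

lemma exists_monic_eisenstein_near_product:
  obtains P f where "degree P = n + 1" and "lead_coeff P = 1" and "eisenstein_at_2 P"
    and "\<forall>i. \<bar>f i\<bar> \<le> 1/2"
    and "map_poly of_int P = [:- of_real \<xi>, 1:] ^ n * [:of_real (A - \<xi>), 1:] + smult 4 (rounding_error n f)"
proof -
  define G :: "complex poly" where "G = [:- of_real \<xi>, 1:] ^ n * [:of_real (A - \<xi>), 1:]"
  define V where "V = monom 1 (n + 1) - G"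
  have dG: "degree G = n + 1"
    unfolding G_def by (subst degree_mult_eq) (simp_all add: degree_power_eq)
  have lG: "lead_coeff G = 1"
    unfolding G_def by (subst lead_coeff_mult) (simp add: lead_coeff_power)
  have "degree V \<le> n"
  proof (rule degree_le, intro allI impI)
    fix k assume "n < k"
    then show "coeff V k = 0"
      using lG dG by (cases "k = n + 1") (auto simp: V_def coeff_eq_0 coeff_monom)
  qed
  moreover have "real_poly V" unfolding V_def G_def
    using real_poly_linear[of "-\<xi>" 1] real_poly_linear[of "A - \<xi>" 1]
    by (intro real_poly_diff real_poly_monom real_poly_mult real_poly_power) simp_all
  ultimately obtain R f where R: "degree R \<le> n" "\<forall>i. \<bar>f i\<bar> \<le> 1/2"
    and eq: "map_poly of_int ([:-2:] + smult 4 R) = V - smult 4 (rounding_error n f)"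
    using rounding_with_residues[of V n "[:-2:]" 4] by auto
  define P where "P = monom 1 (n + 1) - ([:-2:] + smult 4 R)"
  have "map_poly of_int P = G + smult 4 (rounding_error n f)"
    unfolding P_def map_poly_of_int_diff eq by (simp add: V_def map_poly_monom)
  have cR: "coeff R k = 0" if "k > n" for k using R(1) that by (simp add: coeff_eq_0)
  have cP: "coeff P k = (if k = n + 1 then 1 else 0) + (if k = 0 then 2 else 0) - 4 * coeff R k" for k
    unfolding P_def by (simp add: coeff_monom coeff_pCons split: nat.split)
  have dP: "degree P = n + 1"
  proof (rule antisym)
    show "degree P \<le> n + 1" using cP cR by (intro degree_le) auto
    show "n + 1 \<le> degree P" using cP[of "n + 1"] cR[of "n + 1"] by (intro le_degree) simp
  qed
  moreover have "lead_coeff P = 1" using dP cP[of "n + 1"] cR[of "n + 1"] by simp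
  moreover have "eisenstein_at_2 P"
  proof -
    have "(2 - 4 * w) mod 4 = 2" for w :: int by presburger
    then show ?thesis unfolding eisenstein_at_2_def using cP dP \<open>lead_coeff P = 1\<close> by auto
  qed
  ultimately show ?thesis
    using that R(2) \<open>map_poly of_int P = G + smult 4 (rounding_error n f)\<close> unfolding G_def by blast
qed

lemma roots_annulus_of_near_product:
  fixes z :: complex and n :: nat
  defines "K \<equiv> (real n + 1) * (2 * C) ^ n * Q ^ n"
  assumes f: "\<forall>i. \<bar>f i\<bar> \<le> 1/2" and A: "4 * K < A"
    and P: "map_poly of_int P = [:- of_real \<xi>, 1:] ^ n * [:of_real (A - \<xi>), 1:] + smult 4 (rounding_error n f)"
    and z: "poly (map_poly of_int P) z = 0"
  shows "norm (z - of_real \<xi>) < 1 / Q^2 \<or> norm (z - of_real \<xi>) > A / 2"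
proof (rule ccontr)
  define \<rho> where "\<rho> = norm (z - of_real \<xi>)"
  assume "\<not> ?thesis"
  then have near: "1 / Q^2 \<le> \<rho>" "\<rho> \<le> A / 2" unfolding \<rho>_def by auto
  then have "\<rho> > 0" using Q_pos by (smt (verit) divide_pos_pos zero_less_power)
  have "(z - of_real \<xi>) ^ n * ((z - of_real \<xi>) + of_real A) = - (4 * poly (rounding_error n f) z)"
    using z unfolding P by (simp add: algebra_simps eq_neg_iff_add_eq_0)
  then have "\<rho> ^ n * norm ((z - of_real \<xi>) + of_real A) = 4 * norm (poly (rounding_error n f) z)"
    unfolding \<rho>_def by (metis norm_minus_cancel norm_mult norm_power norm_numeral)
  moreover have "norm ((z - of_real \<xi>) + of_real A) \<ge> A - \<rho>"
    using norm_triangle_ineq2[of "of_real A" "- (z - of_real \<xi>)"] near \<open>\<rho> > 0\<close>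
    by (simp add: \<rho>_def algebra_simps norm_minus_commute)
  moreover have "4 * norm (poly (rounding_error n f) z) \<le> 2 * K * \<rho> ^ n"
  proof -
    have "norm (poly (rounding_error n f) z) \<le> (real n + 1) / 2 * (2 * C) ^ n * Q ^ n * \<rho> ^ n"
      unfolding \<rho>_def by (rule norm_rounding_error_le[OF f]) (use near(1) in \<open>simp add: \<rho>_def\<close>)
    also have "\<dots> = K / 2 * \<rho> ^ n" by (simp add: K_def)
    finally show ?thesis by simp
  qed
  moreover have "2 * K * \<rho> ^ n < \<rho> ^ n * (A - \<rho>)"
  proof -
    have "2 * K < A - \<rho>" using A near(2) by linarith
    then show ?thesis using \<open>\<rho> > 0\<close> by (simp add: mult.commute)
  qed
  ultimately show False using \<open>\<rho> > 0\<close> by (smt (verit) mult_left_mono zero_le_power)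
qed

lemma scale_const_ge_1: "1 \<le> (real n + 1) * (2 * C) ^ n * Q ^ n"
proof -
  have "1 * (1 * 1) \<le> (real n + 1) * ((2 * C) ^ n * Q ^ n)"
    by (intro mult_mono one_le_power) (use C_ge_1 Q_ge_1 in auto)
  then show ?thesis by (simp add: mult.assoc)
qed

lemma near_product_value:
  assumes "map_poly of_int P = [:- of_real \<xi>, 1:] ^ n * [:of_real (A - \<xi>), 1:] + smult 4 (rounding_error n f)"
  shows "poly (map_poly of_int P) (of_real (\<xi> + t))
    = of_real (t ^ n * (t + A)) + 4 * poly (rounding_error n f) (of_real (\<xi> + t))"
  unfolding assms by (simp add: algebra_simps)

lemma norm_rounding_error_at_le:
  assumes "\<forall>i. \<bar>f i\<bar> \<le> 1/2" and "1 / Q^2 \<le> t"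
  shows "norm (4 * poly (rounding_error n f) (of_real (\<xi> + t))) \<le> 2 * ((real n + 1) * (2 * C) ^ n * Q ^ n) * t ^ n"
proof -
  define K where "K = (real n + 1) * (2 * C) ^ n * Q ^ n"
  have "0 < 1 / Q^2" using Q_pos by simp
  then have "\<bar>t\<bar> = t" using assms(2) by (intro abs_of_pos) linarith
  have "norm (poly (rounding_error n f) (of_real (\<xi> + t))) \<le> (real n + 1) / 2 * (2 * C) ^ n * Q ^ n * \<bar>t\<bar> ^ n"
    using norm_rounding_error_le[OF assms(1), of "of_real (\<xi> + t)" n] assms(2) by simp
  also have "\<dots> = K / 2 * t ^ n" using \<open>\<bar>t\<bar> = t\<close> by (simp add: K_def)
  finally have "norm (4 * poly (rounding_error n f) (of_real (\<xi> + t))) \<le> 2 * K * t ^ n"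
    by (simp add: norm_mult)
  then show ?thesis unfolding K_def .
qed

lemma near_product_value_at_1:
  assumes f: "\<forall>i. \<bar>f i\<bar> \<le> 1/2" and A: "4 * ((real n + 1) * (2 * C) ^ n * Q ^ n) < A"
    and P: "map_poly of_int P = [:- of_real \<xi>, 1:] ^ n * [:of_real (A - \<xi>), 1:] + smult 4 (rounding_error n f)"
  shows "A / 2 \<le> norm (poly (map_poly of_int P) (of_real (\<xi> + 1) :: complex))"
proof -
  have "1 / Q^2 \<le> 1" using Q_ge_1 by simp
  then have "norm (4 * poly (rounding_error n f) (of_real (\<xi> + 1))) \<le> 2 * ((real n + 1) * (2 * C) ^ n * Q ^ n)"
    using norm_rounding_error_at_le[OF f, of 1 n] by simp
  moreover have "norm (of_real (1 + A) :: complex) = 1 + A"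
    unfolding norm_of_real using A scale_const_ge_1[of n] by simp
  moreover have "norm (of_real (1 + A) :: complex) - norm (4 * poly (rounding_error n f) (of_real (\<xi> + 1)))
      \<le> norm (poly (map_poly of_int P) (of_real (\<xi> + 1) :: complex))"
    using near_product_value[OF P, of 1] by (simp only: norm_diff_ineq power_one mult_1 add.commute)
  ultimately show ?thesis using A by linarith
qed

lemma near_product_value_at_2r:
  assumes f: "\<forall>i. \<bar>f i\<bar> \<le> 1/2" and A: "4 * ((real n + 1) * (2 * C) ^ n * Q ^ n) < A"
    and P: "map_poly of_int P = [:- of_real \<xi>, 1:] ^ n * [:of_real (A - \<xi>), 1:] + smult 4 (rounding_error n f)"
  shows "norm (poly (map_poly of_int P) (of_real (\<xi> + 2 / Q^2) :: complex)) \<le> 3 * A * (2 / Q^2) ^ n"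
proof -
  define K where "K = (real n + 1) * (2 * C) ^ n * Q ^ n"
  define t where "t = 2 / Q^2"
  have "Q^2 \<ge> 1" using Q_ge_1 by (simp add: one_le_power)
  then have "2 / Q^2 \<le> 2 / 1" by (intro divide_left_mono) auto
  then have t: "0 < t" "1 / Q^2 \<le> t" "t \<le> 2"
    unfolding t_def using Q_pos by (auto intro: divide_right_mono)
  have "norm (of_real (t ^ n * (t + A)) :: complex) = t ^ n * (t + A)"
    unfolding norm_of_real using t A scale_const_ge_1[of n] by simp
  moreover have "norm (poly (map_poly of_int P) (of_real (\<xi> + t) :: complex))
      \<le> norm (of_real (t ^ n * (t + A)) :: complex) + norm (4 * poly (rounding_error n f) (of_real (\<xi> + t)))"
    unfolding near_product_value[OF P] by (rule norm_triangle_ineq)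
  ultimately have "norm (poly (map_poly of_int P) (of_real (\<xi> + t) :: complex)) \<le> t ^ n * (t + A) + 2 * K * t ^ n"
    using norm_rounding_error_at_le[OF f t(2), of n, folded K_def] by linarith
  also have "\<dots> = t ^ n * (t + A + 2 * K)" by (simp add: algebra_simps)
  also have "\<dots> \<le> t ^ n * (3 * A)"
    using t A scale_const_ge_1[of n] unfolding K_def by (intro mult_left_mono) auto
  finally show ?thesis by (simp add: t_def mult.commute)
qed

lemma poly_height_bounds_of_near_product:
  assumes f: "\<forall>i. \<bar>f i\<bar> \<le> 1/2" and "A \<ge> 0" and dP: "degree P = n + 1"
    and P: "map_poly of_int P = [:- of_real \<xi>, 1:] ^ n * [:of_real (A - \<xi>), 1:] + smult 4 (rounding_error n f)"
    and at_1: "A / 2 \<le> norm (poly (map_poly of_int P) (of_real (\<xi> + 1) :: complex))"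
  shows "A / (2 * (real n + 2) * (\<bar>\<xi>\<bar> + 1) ^ (n + 1)) \<le> real_of_int (poly_height P)"
    and "real_of_int (poly_height P)
      \<le> (1 + \<bar>\<xi>\<bar>) ^ n * (A + \<bar>\<xi>\<bar> + 1) + 2 * (real n + 1) * (C * (\<bar>\<xi>\<bar> + 2)) ^ n * Q ^ n"
proof -
  have H: "0 \<le> real_of_int (poly_height P)"
    using abs_coeff_le_poly_height[of P 0] by linarith
  have "max 1 (norm (of_real (\<xi> + 1) :: complex)) \<le> \<bar>\<xi>\<bar> + 1" by simp
  then have "max 1 (norm (of_real (\<xi> + 1) :: complex)) ^ (n + 1) \<le> (\<bar>\<xi>\<bar> + 1) ^ (n + 1)"
    by (intro power_mono) auto
  then have "(real (n + 1) + 1) * real_of_int (poly_height P) * max 1 (norm (of_real (\<xi> + 1) :: complex)) ^ (n + 1)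
      \<le> (real (n + 1) + 1) * real_of_int (poly_height P) * (\<bar>\<xi>\<bar> + 1) ^ (n + 1)"
    using H by (intro mult_left_mono) auto
  then have "A / 2 \<le> (real (n + 1) + 1) * real_of_int (poly_height P) * (\<bar>\<xi>\<bar> + 1) ^ (n + 1)"
    using at_1 norm_poly_le_poly_height[of P "of_real (\<xi> + 1) :: complex"] unfolding dP by linarith
  then have "A \<le> real_of_int (poly_height P) * (2 * (real n + 2) * (\<bar>\<xi>\<bar> + 1) ^ (n + 1))"
    by (simp add: algebra_simps)
  then show "A / (2 * (real n + 2) * (\<bar>\<xi>\<bar> + 1) ^ (n + 1)) \<le> real_of_int (poly_height P)"
    by (simp add: pos_divide_le_eq)
  have "real_of_int (poly_height P) \<le> poly_l1 (map_poly of_int P :: complex poly)"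
    by (rule poly_height_le_poly_l1)
  also have "\<dots> \<le> poly_l1 ([:- of_real \<xi>, 1:] ^ n * [:of_real (A - \<xi>), 1:] :: complex poly)
      + poly_l1 (smult 4 (rounding_error n f))"
    unfolding P by (rule poly_l1_add_le)
  also have "\<dots> \<le> (1 + \<bar>\<xi>\<bar>) ^ n * (A + \<bar>\<xi>\<bar> + 1) + 2 * (real n + 1) * (C * (\<bar>\<xi>\<bar> + 2)) ^ n * Q ^ n"
  proof (intro add_mono)
    have "poly_l1 ([:- of_real \<xi>, 1:] ^ n :: complex poly) \<le> (1 + \<bar>\<xi>\<bar>) ^ n"
      using poly_l1_power_le[of "[:- of_real \<xi>, 1:] :: complex poly" n] by (simp add: poly_l1_linear add.commute)
    moreover have "poly_l1 ([:of_real (A - \<xi>), 1:] :: complex poly) \<le> A + \<bar>\<xi>\<bar> + 1"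
      using \<open>A \<ge> 0\<close> by (simp add: poly_l1_linear del: of_real_diff)
    ultimately show "poly_l1 ([:- of_real \<xi>, 1:] ^ n * [:of_real (A - \<xi>), 1:] :: complex poly)
        \<le> (1 + \<bar>\<xi>\<bar>) ^ n * (A + \<bar>\<xi>\<bar> + 1)"
      by (intro order.trans[OF poly_l1_mult_le] mult_mono) (auto simp: poly_l1_nonneg)
    have "poly_l1 (smult 4 (rounding_error n f)) \<le> 4 * ((real n + 1) / 2 * (C * (\<bar>\<xi>\<bar> + 2)) ^ n * Q ^ n)"
      using poly_l1_rounding_error_le[OF f, of n] by (simp add: poly_l1_smult mult_ac)
    then show "poly_l1 (smult 4 (rounding_error n f)) \<le> 2 * (real n + 1) * (C * (\<bar>\<xi>\<bar> + 2)) ^ n * Q ^ n"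
      by (simp add: algebra_simps)
  qed
  finally show "real_of_int (poly_height P)
      \<le> (1 + \<bar>\<xi>\<bar>) ^ n * (A + \<bar>\<xi>\<bar> + 1) + 2 * (real n + 1) * (C * (\<bar>\<xi>\<bar> + 2)) ^ n * Q ^ n" .
qed

lemma near_product_root_others_close:
  assumes Q_large: "3 * 2 ^ (3 * n + 3) < Q^2"
    and f: "\<forall>i. \<bar>f i\<bar> \<le> 1/2" and A: "4 * ((real n + 1) * (2 * C) ^ n * Q ^ n) < A" "A \<ge> 8"
    and dP: "degree P = n + 1" and lc: "lead_coeff P = 1"
    and P: "map_poly of_int P = [:- of_real \<xi>, 1:] ^ n * [:of_real (A - \<xi>), 1:] + smult 4 (rounding_error n f)"
  obtains \<alpha> :: complex where "poly (map_poly of_int P) \<alpha> = 0"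
    and "\<And>\<beta>. poly (map_poly of_int P) \<beta> = 0 \<Longrightarrow> \<beta> \<noteq> \<alpha> \<Longrightarrow> norm (\<beta> - of_real \<xi>) < 1 / Q^2"
proof -
  define r where "r = 1 / Q^2"
  have r: "0 < r" "r \<le> 1" unfolding r_def using Q_pos Q_ge_1 by (simp_all add: one_le_power)
  obtain root :: "nat \<Rightarrow> complex"
    where "\<And>z. poly (map_poly of_int P) z = of_int (lead_coeff P) * (\<Prod>i<degree P. z - root i)"
    using complex_roots_of_int_poly[of P] by blast
  then have Pr: "poly (map_poly of_int P) z = (\<Prod>i<n+1. z - root i)" for z using lc dP by simp
  have roots: "poly (map_poly of_int P) z = 0 \<longleftrightarrow> (\<exists>i<n+1. z = root i)" for z
    unfolding Pr prod_zero_iff[OF finite_lessThan] right_minus_eq lessThan_iff by blast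
  obtain i0 where "i0 < n + 1" and near: "\<And>i. i < n + 1 \<Longrightarrow> i \<noteq> i0 \<Longrightarrow> norm (root i - of_real \<xi>) < r"
  proof (rule all_but_one_root_near[of n root "of_real \<xi>" r A])
    show "norm (root i - of_real \<xi>) < r \<or> norm (root i - of_real \<xi>) > A / 2" if "i < n + 1" for i
      using roots_annulus_of_near_product[OF f A(1) P] roots[of "root i"] that unfolding r_def by blast
    show "A / 2 \<le> (\<Prod>i<n+1. norm (of_real \<xi> + 1 - root i))"
      using near_product_value_at_1[OF f A(1) P] unfolding Pr by (simp add: prod_norm)
    show "(\<Prod>i<n+1. norm (of_real \<xi> + of_real (2 * r) - root i)) \<le> 3 * A * (2 * r) ^ n"
      using near_product_value_at_2r[OF f A(1) P] unfolding Pr by (simp add: prod_norm r_def)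
    show "3 * 2 ^ (3 * n + 3) * r < 1" using Q_large Q_pos unfolding r_def by (simp add: field_simps)
  qed (use r A in auto)
  then show ?thesis
    using that[of "root i0"] roots unfolding r_def by (metis (no_types, lifting))
qed

lemma exists_algebraic_integer_conjugates_close:
  assumes Q_large: "3 * 2 ^ (3 * n + 3) < Q^2"
  shows "\<exists>\<alpha>. is_algebraic \<alpha> \<and> algebraic_integer \<alpha> \<and> alg_degree \<alpha> = n + 1 \<and>
     (\<forall>\<beta>\<in>conjugates \<alpha> - {\<alpha>}. cmod (complex_of_real \<xi> - \<beta>) < 1 / Q^2) \<and>
     (4 * (real n + 1) * (2 * C) ^ n + 8) / (2 * (real n + 2) * (\<bar>\<xi>\<bar> + 1) ^ (n + 1)) * Q ^ n
       \<le> real_of_int (alg_height \<alpha>) \<and>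
     real_of_int (alg_height \<alpha>)
       \<le> ((1 + \<bar>\<xi>\<bar>) ^ n * (4 * (real n + 1) * (2 * C) ^ n + 8 + \<bar>\<xi>\<bar> + 1)
          + 2 * (real n + 1) * (C * (\<bar>\<xi>\<bar> + 2)) ^ n) * Q ^ n"
proof -
  define M where "M = 4 * (real n + 1) * (2 * C) ^ n + 8"
  define A where "A = M * Q ^ n"
  have Qn: "Q ^ n \<ge> 1" using Q_ge_1 by (simp add: one_le_power)
  have M: "M \<ge> 8" unfolding M_def using C_ge_1 by simp
  have "M * 1 \<le> M * Q ^ n" using M Qn by (intro mult_left_mono) auto
  then have A: "4 * ((real n + 1) * (2 * C) ^ n * Q ^ n) < A" "A \<ge> 8"
    using Q_pos M unfolding A_def M_def by (simp_all add: algebra_simps)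
  obtain P f where dP: "degree P = n + 1" and lc: "lead_coeff P = 1" and eis: "eisenstein_at_2 P"
    and f: "\<forall>i. \<bar>f i\<bar> \<le> 1/2"
    and P: "map_poly of_int P = [:- of_real \<xi>, 1:] ^ n * [:of_real (A - \<xi>), 1:] + smult 4 (rounding_error n f)"
    by (rule exists_monic_eisenstein_near_product)
  obtain \<alpha> :: complex where \<alpha>: "poly (map_poly of_int P) \<alpha> = 0"
    and near: "\<And>\<beta>. poly (map_poly of_int P) \<beta> = 0 \<Longrightarrow> \<beta> \<noteq> \<alpha> \<Longrightarrow> norm (\<beta> - of_real \<xi>) < 1 / Q^2"
    using near_product_root_others_close[OF Q_large f A dP lc P] by blast
  have "content P dvd 1" using content_dvd_coeff[of P "degree P"] lc by simp
  then have "content P = 1" by (metis normalize_content is_unit_normalize)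
  then have irr: "irreducible P" using eisenstein_at_2_irreducible eis by blast
  have "lead_coeff P > 0" using lc by simp
  note alg = algebraic_number_of_irreducible[OF irr this \<alpha>]
  have "algebraic_integer \<alpha>" unfolding algebraic_integer_def using lc \<alpha> by blast
  moreover have "\<forall>\<beta>\<in>conjugates \<alpha> - {\<alpha>}. cmod (complex_of_real \<xi> - \<beta>) < 1 / Q^2"
    using alg(4) near by (simp add: norm_minus_commute)
  moreover note heights = poly_height_bounds_of_near_product[OF f _ dP P near_product_value_at_1[OF f A(1) P]]
  have "M / (2 * (real n + 2) * (\<bar>\<xi>\<bar> + 1) ^ (n + 1)) * Q ^ n \<le> real_of_int (alg_height \<alpha>)"
    using heights(1) A alg(3) unfolding A_def by simp
  moreover have "real_of_int (alg_height \<alpha>)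
      \<le> ((1 + \<bar>\<xi>\<bar>) ^ n * (M + \<bar>\<xi>\<bar> + 1) + 2 * (real n + 1) * (C * (\<bar>\<xi>\<bar> + 2)) ^ n) * Q ^ n"
  proof -
    have "\<bar>\<xi>\<bar> + 1 \<le> (\<bar>\<xi>\<bar> + 1) * Q ^ n" using Qn by (simp add: mult_le_cancel_left1)
    then have "A + \<bar>\<xi>\<bar> + 1 \<le> (M + \<bar>\<xi>\<bar> + 1) * Q ^ n" unfolding A_def by (simp add: algebra_simps)
    then have "(1 + \<bar>\<xi>\<bar>) ^ n * (A + \<bar>\<xi>\<bar> + 1) \<le> (1 + \<bar>\<xi>\<bar>) ^ n * ((M + \<bar>\<xi>\<bar> + 1) * Q ^ n)"
      by (intro mult_left_mono) auto
    then show ?thesis using heights(2) A alg(3) by (simp add: algebra_simps)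
  qed
  ultimately show ?thesis using alg(1,2) dP unfolding M_def by auto
qed

end

section \<open>From the scale Q to the height\<close>

lemma inverse_square_le_powr:
  fixes H K Q :: real and n :: nat
  assumes H: "0 < H" "H \<le> K * Q ^ n" and K: "K > 0" and Q: "Q > 0" and n: "n \<ge> 1"
  shows "1 / Q^2 \<le> K powr (2 / real n) * H powr (-2 / real n)"
proof -
  have "(K * Q ^ n) powr (-2 / real n) \<le> H powr (-2 / real n)"
    by (rule powr_mono2') (use H n in auto)
  moreover have "(K * Q ^ n) powr (-2 / real n) = K powr (-2 / real n) * Q powr (-2)"
  proof -
    have "(K * Q ^ n) powr (-2 / real n) = K powr (-2 / real n) * (Q powr real n) powr (-2 / real n)"
      using K Q by (simp add: powr_mult powr_realpow)
    also have "\<dots> = K powr (-2 / real n) * Q powr (real n * (-2 / real n))" by (simp add: powr_powr)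
    also have "real n * (-2 / real n) = -2" using n by simp
    finally show ?thesis .
  qed
  ultimately have "K powr (2 / real n) * (K powr (-2 / real n) * Q powr (-2)) \<le> K powr (2 / real n) * H powr (-2 / real n)"
    by (intro mult_left_mono) auto
  moreover have "K powr (2 / real n) * (K powr (-2 / real n) * Q powr (-2)) = 1 / Q^2"
    using K Q by (simp add: powr_add[symmetric] mult.assoc[symmetric] powr_minus powr_realpow divide_inverse)
  ultimately show ?thesis by simp
qed

lemma uniform_in_height:
  fixes good :: "complex \<Rightarrow> bool" and S :: "complex \<Rightarrow> complex set" and h :: "complex \<Rightarrow> real"
  assumes "n \<ge> 1" and "k_low > 0" and "k_up > 0" and "Q0 \<ge> 1"
    and scale: "\<And>Q. Q \<ge> Q0 \<Longrightarrow> \<exists>\<alpha>. good \<alpha> \<and> (\<forall>\<beta>\<in>S \<alpha>. cmod (complex_of_real \<xi> - \<beta>) < 1 / Q^2) \<and>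
        k_low * Q ^ n \<le> h \<alpha> \<and> h \<alpha> \<le> k_up * Q ^ n"
  shows "\<exists>c>0. \<forall>X\<ge>1. \<exists>\<alpha>. (good \<alpha> \<and> (\<forall>\<beta>\<in>S \<alpha>. cmod (complex_of_real \<xi> - \<beta>) \<le> c * h \<alpha> powr (-2 / real n))) \<and>
        k_low * X \<le> h \<alpha> \<and> h \<alpha> \<le> k_up * Q0 ^ n * X"
proof (intro exI[of _ "k_up powr (2 / real n)"] conjI allI impI)
  show "k_up powr (2 / real n) > 0" using assms by simp
  fix X :: real assume "X \<ge> 1"
  define Q where "Q = max Q0 (root n X)"
  have "Q \<ge> Q0" "Q > 0" using \<open>Q0 \<ge> 1\<close> by (auto simp: Q_def)
  have X: "X = root n X ^ n" using \<open>X \<ge> 1\<close> \<open>n \<ge> 1\<close> by simp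
  have "0 \<le> root n X" "root n X \<le> Q" using \<open>X \<ge> 1\<close> by (auto simp: Q_def intro: real_root_ge_zero)
  then have "root n X ^ n \<le> Q ^ n" by (intro power_mono)
  then have "X \<le> Q ^ n" using X by simp
  moreover have "Q ^ n \<le> Q0 ^ n * X"
  proof (cases "Q0 \<ge> root n X")
    case True
    then show ?thesis using \<open>X \<ge> 1\<close> \<open>Q0 \<ge> 1\<close> by (simp add: Q_def mult_le_cancel_left1 one_le_power)
  next
    case False
    then show ?thesis using \<open>X \<ge> 1\<close> \<open>Q0 \<ge> 1\<close> X by (simp add: Q_def mult_le_cancel_right1 one_le_power)
  qed
  moreover obtain \<alpha> where \<alpha>: "good \<alpha>" "\<forall>\<beta>\<in>S \<alpha>. cmod (complex_of_real \<xi> - \<beta>) < 1 / Q^2"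
    "k_low * Q ^ n \<le> h \<alpha>" "h \<alpha> \<le> k_up * Q ^ n"
    using scale[OF \<open>Q \<ge> Q0\<close>] by blast
  ultimately have "k_low * X \<le> h \<alpha>" "h \<alpha> \<le> k_up * Q0 ^ n * X"
    using \<open>k_low > 0\<close> \<open>k_up > 0\<close> by (smt (verit) mult_left_mono mult.assoc)+
  moreover have "h \<alpha> > 0"
    using \<alpha>(3) \<open>k_low > 0\<close> \<open>Q > 0\<close> by (smt (verit) mult_pos_pos zero_less_power)
  then have "cmod (complex_of_real \<xi> - \<beta>) \<le> k_up powr (2 / real n) * h \<alpha> powr (-2 / real n)"
    if "\<beta> \<in> S \<alpha>" for \<beta>
    using \<alpha>(2) that inverse_square_le_powr[OF _ \<alpha>(4) \<open>k_up > 0\<close> \<open>Q > 0\<close> \<open>n \<ge> 1\<close>] by fastforce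
  ultimately show "\<exists>\<alpha>. (good \<alpha> \<and> (\<forall>\<beta>\<in>S \<alpha>. cmod (complex_of_real \<xi> - \<beta>) \<le> k_up powr (2 / real n) * h \<alpha> powr (-2 / real n))) \<and>
        k_low * X \<le> h \<alpha> \<and> h \<alpha> \<le> k_up * Q0 ^ n * X"
    using \<alpha>(1) by blast
qed

lemma common_height_range:
  fixes h :: "'a \<Rightarrow> real" and g :: "'b \<Rightarrow> real"
  assumes a: "\<forall>X\<ge>1. \<exists>\<alpha>. P \<alpha> \<and> c3 * X \<le> h \<alpha> \<and> h \<alpha> \<le> c4 * X"
    and b: "\<forall>X\<ge>1. \<exists>\<gamma>. R \<gamma> \<and> d3 * X \<le> g \<gamma> \<and> g \<gamma> \<le> d4 * X"
  shows "\<forall>X\<ge>1. (\<exists>\<alpha>. P \<alpha> \<and> min c3 d3 * X \<le> h \<alpha> \<and> h \<alpha> \<le> max c4 d4 * X) \<and>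
    (\<exists>\<gamma>. R \<gamma> \<and> min c3 d3 * X \<le> g \<gamma> \<and> g \<gamma> \<le> max c4 d4 * X)"
proof (intro allI impI conjI)
  fix X :: real assume X: "X \<ge> 1"
  have widen: "min c3 d3 * X \<le> c3 * X" "min c3 d3 * X \<le> d3 * X" "c4 * X \<le> max c4 d4 * X" "d4 * X \<le> max c4 d4 * X"
    using X by (simp_all add: mult_right_mono)
  from a X obtain \<alpha> where "P \<alpha>" "c3 * X \<le> h \<alpha>" "h \<alpha> \<le> c4 * X" by blast
  with widen show "\<exists>\<alpha>. P \<alpha> \<and> min c3 d3 * X \<le> h \<alpha> \<and> h \<alpha> \<le> max c4 d4 * X"
    by (intro exI[of _ \<alpha>]) auto
  from b X obtain \<gamma> where "R \<gamma>" "d3 * X \<le> g \<gamma>" "g \<gamma> \<le> d4 * X" by blast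
  with widen show "\<exists>\<gamma>. R \<gamma> \<and> min c3 d3 * X \<le> g \<gamma> \<and> g \<gamma> \<le> max c4 d4 * X"
    by (intro exI[of _ \<gamma>]) auto
qed

lemma algebraic_conjugates_close_uniform:
  assumes "badly_approximable \<xi>" and "n \<ge> 1"
  shows "\<exists>c1>0. \<exists>c3>0. \<exists>c4>0. \<forall>X\<ge>1. \<exists>\<alpha>. ((is_algebraic \<alpha> \<and> alg_degree \<alpha> = n) \<and>
    (\<forall>\<beta>\<in>conjugates \<alpha>. cmod (complex_of_real \<xi> - \<beta>) \<le> c1 * real_of_int (alg_height \<alpha>) powr (-2 / real n))) \<and>
    c3 * X \<le> real_of_int (alg_height \<alpha>) \<and> real_of_int (alg_height \<alpha>) \<le> c4 * X"
proof -
  obtain C where "C \<ge> 1" and basis: "\<And>Q. Q > C \<Longrightarrow> \<exists>p q p' q'. approximation_basis \<xi> C Q p q p' q'"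
    using badly_approximable_basis[OF assms(1)] by blast
  define K where "K = (2 * (real n + 1) * (2 * C) ^ n + 1) * (1 + \<bar>\<xi>\<bar>) ^ n + 2 * (real n + 1) * (C * (\<bar>\<xi>\<bar> + 2)) ^ n"
  have "0 \<le> 2 * (real n + 1) * (2 * C) ^ n" "0 \<le> 2 * (real n + 1) * (C * (\<bar>\<xi>\<bar> + 2)) ^ n"
    using \<open>C \<ge> 1\<close> by simp_all
  moreover from this(1) have "0 < (2 * (real n + 1) * (2 * C) ^ n + 1) * (1 + \<bar>\<xi>\<bar>) ^ n"
    by (intro mult_pos_pos) auto
  ultimately have "K > 0" unfolding K_def by linarith
  have "\<exists>c>0. \<forall>X\<ge>1. \<exists>\<alpha>. ((is_algebraic \<alpha> \<and> alg_degree \<alpha> = n) \<and>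
      (\<forall>\<beta>\<in>conjugates \<alpha>. cmod (complex_of_real \<xi> - \<beta>) \<le> c * real_of_int (alg_height \<alpha>) powr (-2 / real n))) \<and>
      1 / (2 * C) ^ n * X \<le> real_of_int (alg_height \<alpha>) \<and> real_of_int (alg_height \<alpha>) \<le> K * (C + 1) ^ n * X"
  proof (rule uniform_in_height[where h = "\<lambda>\<alpha>. real_of_int (alg_height \<alpha>)"])
    fix Q :: real assume "Q \<ge> C + 1"
    then obtain p q p' q' where "approximation_basis \<xi> C Q p q p' q'" using basis by fastforce
    from approximation_basis.exists_algebraic_conjugates_close[OF this assms(2)]
    show "\<exists>\<alpha>. (is_algebraic \<alpha> \<and> alg_degree \<alpha> = n) \<and> (\<forall>\<beta>\<in>conjugates \<alpha>. cmod (complex_of_real \<xi> - \<beta>) < 1 / Q^2) \<and>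
        1 / (2 * C) ^ n * Q ^ n \<le> real_of_int (alg_height \<alpha>) \<and> real_of_int (alg_height \<alpha>) \<le> K * Q ^ n"
      by (simp add: K_def power_divide)
  qed (use assms \<open>C \<ge> 1\<close> \<open>K > 0\<close> in auto)
  moreover have "K * (C + 1) ^ n > 0" using \<open>K > 0\<close> \<open>C \<ge> 1\<close> by simp
  moreover have "1 / (2 * C) ^ n > 0" using \<open>C \<ge> 1\<close> by (intro divide_pos_pos zero_less_power) auto
  ultimately show ?thesis by blast
qed

lemma algebraic_integer_conjugates_close_uniform:
  assumes "badly_approximable \<xi>" and "n \<ge> 1"
  shows "\<exists>c2>0. \<exists>c3>0. \<exists>c4>0. \<forall>X\<ge>1. \<exists>\<alpha>. ((is_algebraic \<alpha> \<and> algebraic_integer \<alpha> \<and> alg_degree \<alpha> = n + 1) \<and>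
    (\<forall>\<beta>\<in>conjugates \<alpha> - {\<alpha>}. cmod (complex_of_real \<xi> - \<beta>) \<le> c2 * real_of_int (alg_height \<alpha>) powr (-2 / real n))) \<and>
    c3 * X \<le> real_of_int (alg_height \<alpha>) \<and> real_of_int (alg_height \<alpha>) \<le> c4 * X"
proof -
  obtain C where "C \<ge> 1" and basis: "\<And>Q. Q > C \<Longrightarrow> \<exists>p q p' q'. approximation_basis \<xi> C Q p q p' q'"
    using badly_approximable_basis[OF assms(1)] by blast
  define Q0 :: real where "Q0 = C + 3 * 2 ^ (3 * n + 3)"
  define M where "M = 4 * (real n + 1) * (2 * C) ^ n + 8"
  define k_low where "k_low = M / (2 * (real n + 2) * (\<bar>\<xi>\<bar> + 1) ^ (n + 1))"
  define k_up where "k_up = (1 + \<bar>\<xi>\<bar>) ^ n * (M + \<bar>\<xi>\<bar> + 1) + 2 * (real n + 1) * (C * (\<bar>\<xi>\<bar> + 2)) ^ n"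
  have "M > 0" unfolding M_def using \<open>C \<ge> 1\<close> by (intro add_nonneg_pos) auto
  have "Q0 \<ge> 1" unfolding Q0_def using \<open>C \<ge> 1\<close> by (auto intro: add_increasing2)
  have "k_low > 0" unfolding k_low_def using \<open>M > 0\<close> by (intro divide_pos_pos mult_pos_pos) auto
  have "0 \<le> 2 * (real n + 1) * (C * (\<bar>\<xi>\<bar> + 2)) ^ n" using \<open>C \<ge> 1\<close> by simp
  moreover have "0 < (1 + \<bar>\<xi>\<bar>) ^ n * (M + \<bar>\<xi>\<bar> + 1)" using \<open>M > 0\<close> by (intro mult_pos_pos) auto
  ultimately have "k_up > 0" unfolding k_up_def by linarith
  have "\<exists>c>0. \<forall>X\<ge>1. \<exists>\<alpha>. ((is_algebraic \<alpha> \<and> algebraic_integer \<alpha> \<and> alg_degree \<alpha> = n + 1) \<and>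
      (\<forall>\<beta>\<in>conjugates \<alpha> - {\<alpha>}. cmod (complex_of_real \<xi> - \<beta>) \<le> c * real_of_int (alg_height \<alpha>) powr (-2 / real n))) \<and>
      k_low * X \<le> real_of_int (alg_height \<alpha>) \<and> real_of_int (alg_height \<alpha>) \<le> k_up * Q0 ^ n * X"
  proof (rule uniform_in_height[where h = "\<lambda>\<alpha>. real_of_int (alg_height \<alpha>)" and S = "\<lambda>\<alpha>. conjugates \<alpha> - {\<alpha>}"])
    fix Q :: real assume "Q \<ge> Q0"
    moreover have "(0::real) < 3 * 2 ^ (3 * n + 3)" by simp
    ultimately have "Q > C" "Q \<ge> 1" "Q > 3 * 2 ^ (3 * n + 3)" using \<open>C \<ge> 1\<close> unfolding Q0_def by linarith+
    moreover have "Q \<le> Q^2" using \<open>Q \<ge> 1\<close> by (simp add: power2_eq_square mult_le_cancel_left1)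
    ultimately have "3 * 2 ^ (3 * n + 3) < Q^2" by linarith
    obtain p q p' q' where "approximation_basis \<xi> C Q p q p' q'" using basis \<open>Q > C\<close> by blast
    from approximation_basis.exists_algebraic_integer_conjugates_close[OF this \<open>3 * 2 ^ (3 * n + 3) < Q^2\<close>]
    show "\<exists>\<alpha>. (is_algebraic \<alpha> \<and> algebraic_integer \<alpha> \<and> alg_degree \<alpha> = n + 1) \<and>
        (\<forall>\<beta>\<in>conjugates \<alpha> - {\<alpha>}. cmod (complex_of_real \<xi> - \<beta>) < 1 / Q^2) \<and>
        k_low * Q ^ n \<le> real_of_int (alg_height \<alpha>) \<and> real_of_int (alg_height \<alpha>) \<le> k_up * Q ^ n"
      by (simp add: k_low_def k_up_def M_def)
  qed (use assms \<open>k_low > 0\<close> \<open>k_up > 0\<close> \<open>Q0 \<ge> 1\<close> in auto)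
  moreover have "k_up * Q0 ^ n > 0" using \<open>k_up > 0\<close> \<open>Q0 \<ge> 1\<close> by simp
  ultimately show ?thesis using \<open>k_low > 0\<close> by blast
qed

theorem theoremB:
  fixes \<xi> :: real and n :: nat
  assumes "badly_approximable \<xi>" and "n \<ge> 1"
  shows "\<exists>c1 c2 c3 c4 :: real. c1 > 0 \<and> c2 > 0 \<and> c3 > 0 \<and> c4 > 0 \<and>
    (\<forall>X::real. X \<ge> 1 \<longrightarrow>
      (\<exists>\<alpha>. is_algebraic \<alpha> \<and> alg_degree \<alpha> = n \<and>
         (\<forall>\<beta>\<in>conjugates \<alpha>. cmod (complex_of_real \<xi> - \<beta>) \<le> c1 * real_of_int (alg_height \<alpha>) powr (-2 / real n)) \<and>
         c3 * X \<le> real_of_int (alg_height \<alpha>) \<and> real_of_int (alg_height \<alpha>) \<le> c4 * X) \<and>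
      (\<exists>\<alpha>. is_algebraic \<alpha> \<and> algebraic_integer \<alpha> \<and> alg_degree \<alpha> = n + 1 \<and>
         (\<forall>\<beta>\<in>conjugates \<alpha> - {\<alpha>}. cmod (complex_of_real \<xi> - \<beta>) \<le> c2 * real_of_int (alg_height \<alpha>) powr (-2 / real n)) \<and>
         c3 * X \<le> real_of_int (alg_height \<alpha>) \<and> real_of_int (alg_height \<alpha>) \<le> c4 * X))"
proof -
  obtain c1 c3 c4 where "c1 > 0" "c3 > 0" "c4 > 0" and a: "\<forall>X\<ge>1. \<exists>\<alpha>. ((is_algebraic \<alpha> \<and> alg_degree \<alpha> = n) \<and>
      (\<forall>\<beta>\<in>conjugates \<alpha>. cmod (complex_of_real \<xi> - \<beta>) \<le> c1 * real_of_int (alg_height \<alpha>) powr (-2 / real n))) \<and>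
      c3 * X \<le> real_of_int (alg_height \<alpha>) \<and> real_of_int (alg_height \<alpha>) \<le> c4 * X"
    using algebraic_conjugates_close_uniform[OF assms] by blast
  obtain c2 c3' c4' where "c2 > 0" "c3' > 0" "c4' > 0" and b: "\<forall>X\<ge>1. \<exists>\<alpha>.
      ((is_algebraic \<alpha> \<and> algebraic_integer \<alpha> \<and> alg_degree \<alpha> = n + 1) \<and>
      (\<forall>\<beta>\<in>conjugates \<alpha> - {\<alpha>}. cmod (complex_of_real \<xi> - \<beta>) \<le> c2 * real_of_int (alg_height \<alpha>) powr (-2 / real n))) \<and>
      c3' * X \<le> real_of_int (alg_height \<alpha>) \<and> real_of_int (alg_height \<alpha>) \<le> c4' * X"
    using algebraic_integer_conjugates_close_uniform[OF assms] by blast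
  have "min c3 c3' > 0" "max c4 c4' > 0" using \<open>c3 > 0\<close> \<open>c3' > 0\<close> \<open>c4 > 0\<close> by auto
  with \<open>c1 > 0\<close> \<open>c2 > 0\<close> common_height_range[OF a b] show ?thesis
    by (intro exI[of _ c1] exI[of _ c2] exI[of _ "min c3 c3'"] exI[of _ "max c4 c4'"]) (simp only: conj_assoc)
qed

end
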